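(* Let $P > Q \ge 1$ and $N \ge 1$ be integers. Let $\bm{A} \in \mathbb{R}^{P\times P}$ be orthogonal. For each $i = 1,\dots,N$ let $p_{i,1},\dots,p_{i,Q} > 0$, let $\bm{N}_i$ be a symmetric positive definite $(P-Q)\times(P-Q)$ matrix, and let $$\bm{E}_i = \begin{pmatrix} \operatorname{diag}(p_{i,1},\dots,p_{i,Q}) & 0 \\ 0 & \bm{N}_i\end{pmatrix}, \qquad \bm{C}_i = \bm{A}\bm{E}_i\bm{A}^{\top}.$$ Let $\bm{\alpha} \in \mathbb{R}^Q$ and $y_i = \sum_{j=1}^Q \alpha_j \sqrt{p_{i,j}}$. Let $\overline{\bm{C}} = \arg\min_{\bm{S}\in\mathcal{S}_P^{++}} \sum_{i=1}^N d_W(\bm{C}_i,\bm{S})^2$ be the Wasserstein mean of $\bm{C}_1,\dots,\bm{C}_N$. Let $\overline{\bm{Y}}\in\mathbb{R}^{P\times P}$ satisfy $\overline{\bm{Y}}\,\overline{\bm{Y}}^{\top}=\overline{\bm{C}}$ and, for each $i$, let $\bm{Y}_i \in \mathbb{R}^{P\times P}$ satisfy $\bm{Y}_i\bm{Y}_i^{\top} = \bm{C}_i$. Let $\overline{\bm{Y}}^{\top}\bm{Y}_i = \bm{U}_i\bm{\Sigma}_i\bm{V}_i^{\top}$ be a singular value decomposition, $\bm{Q}_i^* = \bm{V}_i\bm{U}_i^{\top}$, and $$\bm{v}_i = \operatorname{vec}(\bm{Y}_i\bm{Q}_i^* - \overline{\bm{Y}}) \in \mathbb{R}^{P^2}.$$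 Then there exist $\bm{\beta}\in\mathbb{R}^{P^2}$ and $c\in\mathbb{R}$ such that $y_i = \bm{\beta}^{\top}\bm{v}_i + c$ for all $i=1,\dots,N$.
   Context: $\mathcal{S}_P^{++}$ is the set of $P\times P$ real symmetric positive definite matrices. The Wasserstein (Bures) distance is $d_W(\bm{S},\bm{S}') = \big[\operatorname{Tr}(\bm{S}) + \operatorname{Tr}(\bm{S}') - 2\operatorname{Tr}\big((\bm{S}^{1/2}\bm{S}'\bm{S}^{1/2})^{1/2}\big)\big]^{1/2}$, where $\bm{M}^{1/2}$ denotes the symmetric positive semi-definite square root. $\operatorname{vec}(\bm{M})$ is the vector of all coefficients of the matrix $\bm{M}$. The vector $\bm{v}_i$ is the tangent-space vectorization of $\bm{C}_i$ at $\overline{\bm{C}}$ associated with the Wasserstein metric (the quotient of $\mathbb{R}^{P\times P}_*$ with the Frobenius metric by the orthogonal group). *)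

theory Defs
  imports "Jordan_Normal_Form.Matrix"
begin

definition mtrace :: "real mat \<Rightarrow> real" where
  "mtrace A = (\<Sum>i<dim_row A. A $$ (i, i))"

definition sym_mat :: "real mat \<Rightarrow> bool" where
  "sym_mat A \<longleftrightarrow> transpose_mat A = A"

definition psd_mat :: "nat \<Rightarrow> real mat \<Rightarrow> bool" where
  "psd_mat n A \<longleftrightarrow> A \<in> carrier_mat n n \<and> sym_mat A \<and>
     (\<forall>v \<in> carrier_vec n. v \<bullet> (A *\<^sub>v v) \<ge> 0)"

definition pd_mat :: "nat \<Rightarrow> real mat \<Rightarrow> bool" where
  "pd_mat n A \<longleftrightarrow> A \<in> carrier_mat n n \<and> sym_mat A \<and>
     (\<forall>v \<in> carrier_vec n. v \<noteq> 0\<^sub>v n \<longrightarrow> v \<bullet> (A *\<^sub>v v) > 0)"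

text \<open>The symmetric positive semi-definite square root (unique for PSD input).\<close>
definition psd_sqrt :: "real mat \<Rightarrow> real mat" where
  "psd_sqrt S = (THE M. psd_mat (dim_row S) M \<and> M * M = S)"

definition wdist :: "real mat \<Rightarrow> real mat \<Rightarrow> real" where
  "wdist S S' = sqrt (mtrace S + mtrace S'
      - 2 * mtrace (psd_sqrt (psd_sqrt S * S' * psd_sqrt S)))"

definition orth_mat :: "nat \<Rightarrow> real mat \<Rightarrow> bool" where
  "orth_mat n A \<longleftrightarrow> A \<in> carrier_mat n n \<and> A * transpose_mat A = 1\<^sub>m n
      \<and> transpose_mat A * A = 1\<^sub>m n"

text \<open>Row-major vectorization of an n x n matrix into a vector of length n*n.\<close>
definition mvec :: "real mat \<Rightarrow> real vec" where
  "mvec M = vec (dim_row M * dim_col M) (\<lambda>k. M $$ (k div dim_col M, k mod dim_col M))"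

definition block_E :: "nat \<Rightarrow> nat \<Rightarrow> (nat \<Rightarrow> real) \<Rightarrow> real mat \<Rightarrow> real mat" where
  "block_E P Q p Nm = four_block_mat
      (mat Q Q (\<lambda>(a, b). if a = b then p a else 0)) (0\<^sub>m Q (P - Q))
      (0\<^sub>m (P - Q) Q) Nm"

definition is_wasserstein_mean :: "nat \<Rightarrow> nat \<Rightarrow> (nat \<Rightarrow> real mat) \<Rightarrow> real mat \<Rightarrow> bool" where
  "is_wasserstein_mean P N C Cbar \<longleftrightarrow> pd_mat P Cbar \<and>
     (\<forall>S. pd_mat P S \<longrightarrow>
        (\<Sum>i<N. (wdist (C i) Cbar)\<^sup>2) \<le> (\<Sum>i<N. (wdist (C i) S)\<^sup>2))"

end

(*
  Let T_i be the positive semi-definite matrix with T_i Cbar T_i = C_i, the (unique) optimal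
  transport map between the corresponding centred Gaussians; the Procrustes alignment gives
  Y_i Q_i^* Ybar^T = T_i Cbar.  Each reflection A J_j A^T with j < Q fixes every C_i, so by strict
  concavity of the Bures fidelity it fixes the Wasserstein mean, and by uniqueness of transport
  maps it fixes every T_i.  In the frame A the j-th row and column of T_i therefore vanish off the
  diagonal, whence (A^T T_i A)_jj = sqrt (p_ij / b_j) with b_j = (A^T Cbar A)_jj, that is
  (A^T Y_i Q_i^* Ybar^T A)_jj = sqrt p_ij * sqrt b_j.  This entry is linear in Y_i Q_i^* = v_i + Ybar,
  and summing with the weights alpha_j / sqrt b_j gives the affine relation.
*)

theory Submission
  imports Defs "Jordan_Normal_Form.Schur_Decomposition" "Jordan_Normal_Form.Determinant"
begin

lemma sum_eq_single_term:
  "finite A \<Longrightarrow> k \<in> A \<Longrightarrow> (\<And>j. j \<in> A \<Longrightarrow> j \<noteq> k \<Longrightarrow> f j = 0) \<Longrightarrow> sum f A = (f k :: real)"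
  by (metis sum.remove add.right_neutral sum.neutral Diff_iff singletonI)

lemma mtrace_mult_comm:
  assumes A: "A \<in> carrier_mat n m" and B: "B \<in> carrier_mat m n"
  shows "mtrace (A * B) = mtrace (B * A)"
proof -
  have "mtrace (A * B) = (\<Sum>i<n. \<Sum>k<m. A $$ (i,k) * B $$ (k,i))"
    using A B by (simp add: mtrace_def scalar_prod_def lessThan_atLeast0)
  also have "\<dots> = (\<Sum>k<m. \<Sum>i<n. B $$ (k,i) * A $$ (i,k))"
    by (subst sum.swap) (simp add: mult.commute)
  also have "\<dots> = mtrace (B * A)"
    using A B by (simp add: mtrace_def scalar_prod_def lessThan_atLeast0)
  finally show ?thesis .
qed

lemma mtrace_add:
  "A \<in> carrier_mat n n \<Longrightarrow> B \<in> carrier_mat n n \<Longrightarrow> mtrace (A + B) = mtrace A + mtrace B"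
  by (simp add: mtrace_def sum.distrib)

lemma mtrace_smult: "A \<in> carrier_mat n n \<Longrightarrow> mtrace (c \<cdot>\<^sub>m A) = c * mtrace A"
  by (simp add: mtrace_def sum_distrib_left)

lemma mtrace_minus:
  "A \<in> carrier_mat n n \<Longrightarrow> B \<in> carrier_mat n n \<Longrightarrow> mtrace (A - B) = mtrace A - mtrace B"
  by (simp add: mtrace_def sum_subtractf)

lemma mat_eq_of_minus_eq_0:
  "(A :: real mat) \<in> carrier_mat n n \<Longrightarrow> B \<in> carrier_mat n n \<Longrightarrow> A - B = 0\<^sub>m n n \<Longrightarrow> A = B"
  by (metis minus_add_uminus_mat add_uminus_minus_mat eq_matI index_minus_mat(1)
      index_zero_mat(1) carrier_matD right_minus_eq)

lemma mult_mat_assoc_cancel_left: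
  "X \<in> carrier_mat n n \<Longrightarrow> Y \<in> carrier_mat n n \<Longrightarrow> Z \<in> carrier_mat n m \<Longrightarrow> X * Y = 1\<^sub>m n
   \<Longrightarrow> X * (Y * Z) = (Z :: real mat)"
  by (metis assoc_mult_mat left_mult_one_mat)

lemma mult_mat_vec_zero[simp]: "A \<in> carrier_mat m n \<Longrightarrow> A *\<^sub>v 0\<^sub>v n = (0\<^sub>v m :: real vec)"
  by (intro eq_vecI) (auto simp: row_def)

lemma zero_mat_mult_vec[simp]: "x \<in> carrier_vec m \<Longrightarrow> 0\<^sub>m n m *\<^sub>v x = (0\<^sub>v n :: real vec)"
  by (intro eq_vecI) (auto simp: scalar_prod_def intro!: sum.neutral)

lemma mult_mat_vec_eq_0_imp_eq_0:
  assumes A: "A \<in> carrier_mat n m" and B: "B \<in> carrier_mat m n" and BA: "B * A = 1\<^sub>m m"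
    and x: "x \<in> carrier_vec m" and Ax: "A *\<^sub>v x = (0\<^sub>v n :: real vec)"
  shows "x = 0\<^sub>v m"
proof -
  have "x = (B * A) *\<^sub>v x" using BA x by simp
  also have "\<dots> = B *\<^sub>v (A *\<^sub>v x)" using A B x by simp
  finally show ?thesis using Ax B by simp
qed

lemma real_scalar_prod_self_ge_0: "(v :: real vec) \<bullet> v \<ge> 0"
  using conjugate_square_ge_0_vec[of v] by simp

lemma real_scalar_prod_self_eq_0: "(v :: real vec) \<in> carrier_vec n \<Longrightarrow> v \<bullet> v = 0 \<longleftrightarrow> v = 0\<^sub>v n"
  using conjugate_square_eq_0_vec[of v n] by simp

lemma sym_matD: "sym_mat A \<Longrightarrow> A \<in> carrier_mat n n \<Longrightarrow> i < n \<Longrightarrow> j < n \<Longrightarrow> A $$ (i,j) = A $$ (j,i)"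
  unfolding sym_mat_def by (metis carrier_matD index_transpose_mat(1))

lemma sym_mat_congr:
  assumes A: "(A :: real mat) \<in> carrier_mat n n" and s: "sym_mat A" and B: "B \<in> carrier_mat n m"
  shows "sym_mat (transpose_mat B * A * B)"
proof -
  have BA: "transpose_mat B * A \<in> carrier_mat m n" using A B by simp
  have "transpose_mat (transpose_mat B * A * B) = transpose_mat B * transpose_mat (transpose_mat B * A)"
    using transpose_mult[OF BA B] .
  also have "transpose_mat (transpose_mat B * A) = transpose_mat A * B"
    using transpose_mult[of "transpose_mat B" m n A n] A B by simp
  finally have "transpose_mat (transpose_mat B * A * B) = transpose_mat B * (A * B)"
    using s unfolding sym_mat_def by simp
  thus ?thesis unfolding sym_mat_def using A B by simp
qed

lemma sym_mat_scalar_prod: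
  assumes M: "(M :: real mat) \<in> carrier_mat n n" and s: "sym_mat M"
    and x: "x \<in> carrier_vec n" and y: "y \<in> carrier_vec n"
  shows "x \<bullet> (M *\<^sub>v y) = (M *\<^sub>v x) \<bullet> y"
proof -
  have "x \<bullet> (transpose_mat M *\<^sub>v y) = (transpose_mat M *\<^sub>v y) \<bullet> x"
    using M x y by (intro comm_scalar_prod[of _ n]) auto
  also have "\<dots> = y \<bullet> (M *\<^sub>v x)" using transpose_vec_mult_scalar[OF M x y] .
  also have "\<dots> = (M *\<^sub>v x) \<bullet> y" using M x y by (intro comm_scalar_prod[of _ n]) auto
  finally show ?thesis using s unfolding sym_mat_def by simp
qed

lemma quadratic_form_congr:
  assumes A: "(A :: real mat) \<in> carrier_mat n n" and B: "B \<in> carrier_mat n m" and x: "x \<in> carrier_vec m"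
  shows "x \<bullet> ((transpose_mat B * A * B) *\<^sub>v x) = (B *\<^sub>v x) \<bullet> (A *\<^sub>v (B *\<^sub>v x))"
proof -
  have "(transpose_mat B * A * B) *\<^sub>v x = transpose_mat B *\<^sub>v (A *\<^sub>v (B *\<^sub>v x))"
    using A B x assoc_mult_mat_vec[of "transpose_mat B" m n "A * B" m x]
      assoc_mult_mat_vec[of A n n B m x]
    by simp
  moreover have "x \<bullet> (transpose_mat B *\<^sub>v (A *\<^sub>v (B *\<^sub>v x))) = (B *\<^sub>v x) \<bullet> (A *\<^sub>v (B *\<^sub>v x))"
    using transpose_vec_mult_scalar[OF B x, of "A *\<^sub>v (B *\<^sub>v x)"] A B x
      comm_scalar_prod[of x m "transpose_mat B *\<^sub>v (A *\<^sub>v (B *\<^sub>v x))"]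
      comm_scalar_prod[of "A *\<^sub>v (B *\<^sub>v x)" n "B *\<^sub>v x"]
    by simp
  ultimately show ?thesis by simp
qed

lemma mult_mat_vec_unit_vec:
  assumes "(M :: real mat) \<in> carrier_mat n n" and "k < n"
  shows "M *\<^sub>v unit_vec n k = col M k"
  using col_mult2[of M n n "1\<^sub>m n" n k] assms by simp

lemma mat_diag_entry_eq_quadratic_form:
  assumes "(M :: real mat) \<in> carrier_mat n n" and "k < n"
  shows "M $$ (k,k) = unit_vec n k \<bullet> (M *\<^sub>v unit_vec n k)"
  using mult_mat_vec_unit_vec[OF assms] assms by simp

lemma orth_matD:
  assumes "orth_mat n Om"
  shows "Om \<in> carrier_mat n n" "transpose_mat Om \<in> carrier_mat n n"
    "Om * transpose_mat Om = 1\<^sub>m n" "transpose_mat Om * Om = 1\<^sub>m n"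
  using assms unfolding orth_mat_def by auto

lemma orth_mat_cancel:
  assumes Om: "orth_mat n Om" and Z: "dim_row Z = n"
  shows "Om * (transpose_mat Om * Z) = Z" "transpose_mat Om * (Om * Z) = Z"
proof -
  note o = orth_matD[OF Om]
  have Zc: "Z \<in> carrier_mat n (dim_col Z)" using Z by auto
  show "Om * (transpose_mat Om * Z) = Z" "transpose_mat Om * (Om * Z) = Z"
    using mult_mat_assoc_cancel_left[OF o(1) o(2) Zc o(3)]
      mult_mat_assoc_cancel_left[OF o(2) o(1) Zc o(4)] by auto
qed

lemma orth_mat_transpose: "orth_mat n Om \<Longrightarrow> orth_mat n (transpose_mat Om)"
  unfolding orth_mat_def by auto

lemma orth_mat_inj:
  "orth_mat n Om \<Longrightarrow> x \<in> carrier_vec n \<Longrightarrow> Om *\<^sub>v x = 0\<^sub>v n \<Longrightarrow> x = 0\<^sub>v n"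
  by (rule mult_mat_vec_eq_0_imp_eq_0[OF orth_matD(1,2,4)])

lemma psd_matD:
  "psd_mat n A \<Longrightarrow> A \<in> carrier_mat n n"
  "psd_mat n A \<Longrightarrow> sym_mat A"
  "psd_mat n A \<Longrightarrow> v \<in> carrier_vec n \<Longrightarrow> v \<bullet> (A *\<^sub>v v) \<ge> 0"
  unfolding psd_mat_def by auto

lemma pd_matD:
  "pd_mat n A \<Longrightarrow> A \<in> carrier_mat n n"
  "pd_mat n A \<Longrightarrow> sym_mat A"
  "pd_mat n A \<Longrightarrow> v \<in> carrier_vec n \<Longrightarrow> v \<noteq> 0\<^sub>v n \<Longrightarrow> v \<bullet> (A *\<^sub>v v) > 0"
  unfolding pd_mat_def by auto

lemma pd_imp_psd: assumes "pd_mat n A" shows "psd_mat n A"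
  unfolding psd_mat_def
proof (intro conjI ballI)
  show "A \<in> carrier_mat n n" "sym_mat A" using pd_matD[OF assms] by auto
  fix v :: "real vec" assume v: "v \<in> carrier_vec n"
  show "v \<bullet> (A *\<^sub>v v) \<ge> 0"
    using pd_matD(1)[OF assms] pd_matD(3)[OF assms v] by (cases "v = 0\<^sub>v n") auto
qed

lemma pd_mat_inj: "pd_mat n A \<Longrightarrow> x \<in> carrier_vec n \<Longrightarrow> A *\<^sub>v x = 0\<^sub>v n \<Longrightarrow> x = 0\<^sub>v n"
  using pd_matD(3)[of n A x] by fastforce

lemma psd_congr:
  assumes A: "psd_mat n A" and B: "B \<in> carrier_mat n m"
  shows "psd_mat m (transpose_mat B * A * B)"
  unfolding psd_mat_def
proof (intro conjI ballI)
  show "transpose_mat B * A * B \<in> carrier_mat m m" using psd_matD(1)[OF A] B by simp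
  show "sym_mat (transpose_mat B * A * B)" using sym_mat_congr[OF psd_matD(1,2)[OF A] B] .
  fix x :: "real vec" assume x: "x \<in> carrier_vec m"
  have "B *\<^sub>v x \<in> carrier_vec n" using B x by simp
  thus "x \<bullet> ((transpose_mat B * A * B) *\<^sub>v x) \<ge> 0"
    unfolding quadratic_form_congr[OF psd_matD(1)[OF A] B x] using psd_matD(3)[OF A] by blast
qed

lemma pd_congr:
  assumes A: "pd_mat n A" and B: "B \<in> carrier_mat n m"
    and inj: "\<And>x. x \<in> carrier_vec m \<Longrightarrow> B *\<^sub>v x = 0\<^sub>v n \<Longrightarrow> x = 0\<^sub>v m"
  shows "pd_mat m (transpose_mat B * A * B)"
  unfolding pd_mat_def
proof (intro conjI ballI impI)
  show "transpose_mat B * A * B \<in> carrier_mat m m" using pd_matD(1)[OF A] B by simp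
  show "sym_mat (transpose_mat B * A * B)" using sym_mat_congr[OF pd_matD(1,2)[OF A] B] .
  fix x :: "real vec" assume x: "x \<in> carrier_vec m" and x0: "x \<noteq> 0\<^sub>v m"
  have "B *\<^sub>v x \<in> carrier_vec n" using B x by simp
  moreover have "B *\<^sub>v x \<noteq> 0\<^sub>v n" using inj x x0 by blast
  ultimately show "x \<bullet> ((transpose_mat B * A * B) *\<^sub>v x) > 0"
    unfolding quadratic_form_congr[OF pd_matD(1)[OF A] B x] using pd_matD(3)[OF A] by blast
qed

lemma pd_congr_sym:
  assumes K: "pd_mat n K" and S: "pd_mat n S"
  shows "pd_mat n (K * S * K)"
proof -
  have "transpose_mat K = K" using pd_matD(2)[OF K] unfolding sym_mat_def .
  thus ?thesis using pd_congr[OF S pd_matD(1)[OF K] pd_mat_inj[OF K]] by simp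
qed

lemma pd_midpoint:
  assumes S0: "pd_mat n S0" and S1: "pd_mat n S1"
  shows "pd_mat n ((1/2) \<cdot>\<^sub>m (S0 + S1))"
proof -
  have S0c: "S0 \<in> carrier_mat n n" and S1c: "S1 \<in> carrier_mat n n" using pd_matD(1) S0 S1 by auto
  show ?thesis unfolding pd_mat_def
  proof (intro conjI ballI impI)
    show "(1/2) \<cdot>\<^sub>m (S0 + S1) \<in> carrier_mat n n" using S0c S1c by simp
    show "sym_mat ((1/2) \<cdot>\<^sub>m (S0 + S1))"
      using pd_matD(2)[OF S0] pd_matD(2)[OF S1] S0c S1c unfolding sym_mat_def
      by (intro eq_matI) (auto, metis index_transpose_mat(1) carrier_matD)
    fix v :: "real vec" assume v: "v \<in> carrier_vec n" "v \<noteq> 0\<^sub>v n"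
    have "((1/2) \<cdot>\<^sub>m (S0 + S1)) *\<^sub>v v = (1/2) \<cdot>\<^sub>v (S0 *\<^sub>v v + S1 *\<^sub>v v)"
      using S0c S1c v
      by (intro eq_vecI) (auto simp: add_scalar_prod_distrib[of _ n] smult_scalar_prod_distrib[of _ n])
    hence "v \<bullet> (((1/2) \<cdot>\<^sub>m (S0 + S1)) *\<^sub>v v) = (1/2) * (v \<bullet> (S0 *\<^sub>v v) + v \<bullet> (S1 *\<^sub>v v))"
      using S0c S1c v by (simp add: scalar_prod_add_distrib[of _ n])
    thus "v \<bullet> (((1/2) \<cdot>\<^sub>m (S0 + S1)) *\<^sub>v v) > 0"
      using pd_matD(3)[OF S0 v] pd_matD(3)[OF S1 v] by simp
  qed
qed

lemma real_mat_inverse_exists: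
  assumes A: "(A :: real mat) \<in> carrier_mat n n"
    and inj: "\<And>x. x \<in> carrier_vec n \<Longrightarrow> A *\<^sub>v x = 0\<^sub>v n \<Longrightarrow> x = 0\<^sub>v n"
  obtains B where "B \<in> carrier_mat n n" "A * B = 1\<^sub>m n" "B * A = 1\<^sub>m n"
proof -
  have "det A \<noteq> 0" using det_0_iff_vec_prod_zero[OF A] inj by blast
  from det_non_zero_imp_unit[OF A this, of undefined]
  have "\<exists>B. B \<in> carrier_mat n n \<and> A * B = 1\<^sub>m n \<and> B * A = 1\<^sub>m n"
    unfolding Units_def ring_mat_def by auto
  thus ?thesis using that by blast
qed

lemma pd_inverse:
  assumes A: "pd_mat n A"
  obtains B where "pd_mat n B" "A * B = 1\<^sub>m n" "B * A = 1\<^sub>m n"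
proof -
  have Ac: "A \<in> carrier_mat n n" using pd_matD(1)[OF A] .
  obtain B where Bc: "B \<in> carrier_mat n n" and AB: "A * B = 1\<^sub>m n" and BA: "B * A = 1\<^sub>m n"
    using real_mat_inverse_exists[OF Ac pd_mat_inj[OF A]] by blast
  have BTc: "transpose_mat B \<in> carrier_mat n n" using Bc by simp
  have BTA: "transpose_mat B * A = 1\<^sub>m n"
    using arg_cong[OF AB, of transpose_mat] transpose_mult[OF Ac Bc] pd_matD(2)[OF A]
    unfolding sym_mat_def by simp
  have "transpose_mat B = transpose_mat B * (A * B)" using AB BTc by simp
  also have "\<dots> = (transpose_mat B * A) * B" using BTc Ac Bc by simp
  finally have symB: "sym_mat B" unfolding sym_mat_def BTA using Bc by simp
  have "pd_mat n B" unfolding pd_mat_def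
  proof (intro conjI ballI impI Bc symB)
    fix x :: "real vec" assume x: "x \<in> carrier_vec n" and x0: "x \<noteq> 0\<^sub>v n"
    define y where "y = B *\<^sub>v x"
    have y: "y \<in> carrier_vec n" unfolding y_def using Bc x by simp
    have Ay: "A *\<^sub>v y = x" unfolding y_def using Ac Bc x AB by (metis assoc_mult_mat_vec one_mult_mat_vec)
    have y0: "y \<noteq> 0\<^sub>v n" using Ay x0 Ac by auto
    have "x \<bullet> (B *\<^sub>v x) = (A *\<^sub>v y) \<bullet> y" unfolding y_def[symmetric] Ay ..
    also have "\<dots> = y \<bullet> (A *\<^sub>v y)" using comm_scalar_prod[of "A *\<^sub>v y" n y] Ac y by simp
    finally show "x \<bullet> (B *\<^sub>v x) > 0" using pd_matD(3)[OF A y y0] by simp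
  qed
  thus ?thesis using AB BA that by blast
qed

section \<open>The spectral theorem for real symmetric matrices\<close>

lemma real_sym_complex_eigenvalue_real:
  assumes A: "A \<in> carrier_mat n n" and sym: "sym_mat A"
    and w: "eigenvector (map_mat complex_of_real A) w a"
  shows "Im a = 0"
proof -
  have wc: "w \<in> carrier_vec n" "w \<noteq> 0\<^sub>v n" "map_mat complex_of_real A *\<^sub>v w = a \<cdot>\<^sub>v w"
    using w A unfolding eigenvector_def by auto
  have ev: "(\<Sum>j<n. of_real (A$$(i,j)) * w$j) = a * w$i" if i: "i < n" for i
  proof -
    have "(map_mat complex_of_real A *\<^sub>v w) $ i = (\<Sum>j<n. of_real (A$$(i,j)) * w$j)"
      using i A wc(1) by (simp add: scalar_prod_def lessThan_atLeast0)
    thus ?thesis using wc(1,3) i A by simp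
  qed
  \<comment> \<open>The Hermitian form \<open>s = w\<^sup>* A w\<close> is real and equals \<open>a \<parallel>w\<parallel>\<^sup>2\<close>.\<close>
  define s where "s = (\<Sum>i<n. cnj (w$i) * (\<Sum>j<n. of_real (A$$(i,j)) * w$j))"
  define r where "r = (\<Sum>i<n. cnj (w$i) * w$i)"
  have sa: "s = a * r" unfolding s_def r_def using ev by (simp add: sum_distrib_left ac_simps)
  have "cnj s = (\<Sum>i<n. \<Sum>j<n. w$i * of_real (A$$(i,j)) * cnj (w$j))"
    unfolding s_def by (simp add: sum_distrib_left ac_simps)
  also have "\<dots> = (\<Sum>j<n. \<Sum>i<n. w$i * of_real (A$$(i,j)) * cnj (w$j))"
    by (rule sum.swap)
  also have "\<dots> = s"
    unfolding s_def sum_distrib_left by (intro sum.cong refl) (simp add: sym_matD[OF sym A] ac_simps)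
  finally have "Im (cnj s) = Im s" by simp
  hence "Im s = 0" by simp
  obtain k where k: "k < n" "w $ k \<noteq> 0" using wc by (metis carrier_vecD eq_vecI index_zero_vec)
  have "(\<Sum>i<n. (cmod (w$i))^2) \<ge> (cmod (w$k))^2"
    using k by (intro member_le_sum) auto
  moreover have "(cmod (w$k))^2 > 0" using k by simp
  ultimately have "(\<Sum>i<n. (cmod (w$i))^2) > 0" by linarith
  moreover have "r = of_real (\<Sum>i<n. (cmod (w$i))^2)"
    unfolding r_def of_real_sum
    by (intro sum.cong refl) (metis complex_norm_square mult.commute of_real_power)
  ultimately have "Re r > 0" "Im r = 0" by auto
  thus ?thesis using \<open>Im s = 0\<close> unfolding sa by simp
qed

lemma real_sym_unit_eigenvector:
  assumes A: "A \<in> carrier_mat n n" and sym: "sym_mat A" and n: "n > 0"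
  obtains l u where "u \<in> carrier_vec n" "u \<bullet> u = 1" "A *\<^sub>v u = l \<cdot>\<^sub>v u"
proof -
  let ?Ac = "map_mat complex_of_real A"
  have Ac: "?Ac \<in> carrier_mat n n" using A by auto
  from char_poly_factorized[OF Ac] obtain as where cp: "char_poly ?Ac = (\<Prod>a\<leftarrow>as. [:-a,1:])"
    and len: "length as = n" by auto
  then obtain a where a: "a \<in> set as" using n by (cases as) auto
  have "poly (char_poly ?Ac) a = 0" unfolding cp using a
    by (simp add: poly_prod_list_zero_iff)
  hence ev: "eigenvalue ?Ac a" using eigenvalue_root_char_poly[OF Ac] by simp
  then obtain w where "eigenvector ?Ac w a" unfolding eigenvalue_def by auto
  hence "Im a = 0" using real_sym_complex_eigenvalue_real[OF A sym] by blast
  then obtain l where al: "a = of_real l" by (metis complex_is_Real_iff Reals_cases)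
  have "det (char_matrix ?Ac a) = 0" using eigenvalue_det[OF Ac] ev by simp
  moreover have "char_matrix ?Ac a = map_mat complex_of_real (char_matrix A l)"
    unfolding al char_matrix_def using A by (intro eq_matI) auto
  ultimately have "det (char_matrix A l) = 0" by (simp add: of_real_hom.hom_det)
  hence "eigenvalue A l" using eigenvalue_det[OF A] by simp
  then obtain v where "eigenvector A v l" unfolding eigenvalue_def by auto
  hence v: "v \<in> carrier_vec n" "v \<noteq> 0\<^sub>v n" "A *\<^sub>v v = l \<cdot>\<^sub>v v" using A unfolding eigenvector_def by auto
  have vpos: "v \<bullet> v > 0"
    using real_scalar_prod_self_ge_0[of v] real_scalar_prod_self_eq_0[OF v(1)] v(2) by linarith
  define u where "u = (1 / sqrt (v \<bullet> v)) \<cdot>\<^sub>v v"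
  have "u \<in> carrier_vec n" unfolding u_def using v by simp
  moreover have "u \<bullet> u = 1" unfolding u_def using v(1) vpos by (simp add: field_simps)
  moreover have "A *\<^sub>v u = l \<cdot>\<^sub>v u" unfolding u_def using mult_mat_vec[OF A v(1)] v(3)
    by (simp add: smult_smult_assoc mult.commute)
  ultimately show ?thesis using that by blast
qed

lemma orth_mat_with_first_col:
  assumes u: "u \<in> carrier_vec n" and uu: "u \<bullet> u = (1::real)"
  obtains Om where "orth_mat n Om" "col Om 0 = u"
proof -
  have u0: "u \<noteq> 0\<^sub>v n" using uu by auto
  interpret cof_vec_space n "TYPE(real)" .
  note bc = basis_completion[OF u u0]
  define b where "b = basis_completion u"
  have n0: "n > 0" using u0 u by (cases n) auto
  obtain vs where bv: "b = u # vs" using bc(6,7) n0 unfolding b_def[symmetric] by (cases b) auto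
  define ws where "ws = gram_schmidt n b"
  note gs = gram_schmidt_result[OF bc(2) bc(4) bc(5) refl]
  have orth_ws: "corthogonal ws" and ws_carrier: "set ws \<subseteq> carrier_vec n" and lenws: "length ws = n"
    using gs bc(6) unfolding ws_def b_def by auto
  have ws0: "ws ! 0 = u"
    using gram_schmidt_hd[OF u, of vs] lenws n0 unfolding ws_def[symmetric] bv[symmetric] by (cases ws) auto
  have wsc: "ws ! i \<in> carrier_vec n" if "i < n" for i using ws_carrier lenws that by auto
  have orthw: "ws ! i \<bullet> ws ! j = 0 \<longleftrightarrow> i \<noteq> j" if "i < n" "j < n" for i j
    using corthogonalD[OF orth_ws, of i j] lenws that by simp
  define f where "f = (\<lambda>w::real vec. (1 / sqrt (w \<bullet> w)) \<cdot>\<^sub>v w)"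
  define Om where "Om = mat_of_cols n (map f ws)"
  have Omc: "Om \<in> carrier_mat n n" unfolding Om_def using lenws by (metis length_map mat_of_cols_carrier(1))
  have colOm: "col Om j = f (ws ! j)" if "j < n" for j
    unfolding Om_def using that lenws wsc[OF that] by (simp add: f_def)
  have pos: "ws ! i \<bullet> ws ! i > 0" if "i < n" for i
    using orthw[OF that that] real_scalar_prod_self_ge_0[of "ws ! i"] by linarith
  have "transpose_mat Om * Om = 1\<^sub>m n"
  proof (rule eq_matI)
    fix i j assume "i < dim_row (1\<^sub>m n)" and "j < dim_col (1\<^sub>m n)"
    hence i: "i < n" and j: "j < n" by auto
    have "(transpose_mat Om * Om) $$ (i,j) = col Om i \<bullet> col Om j"
      using Omc i j by simp
    also have "\<dots> = (1 / sqrt (ws!i \<bullet> ws!i)) * (1 / sqrt (ws!j \<bullet> ws!j)) * (ws ! i \<bullet> ws ! j)"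
      unfolding colOm[OF i] colOm[OF j] f_def using wsc[OF i] wsc[OF j] by simp
    also have "\<dots> = 1\<^sub>m n $$ (i,j)"
      using orthw[OF i j] pos[OF i] i j by (cases "i = j") (auto simp: field_simps)
    finally show "(transpose_mat Om * Om) $$ (i,j) = 1\<^sub>m n $$ (i,j)" .
  qed (use Omc in auto)
  moreover hence "Om * transpose_mat Om = 1\<^sub>m n"
    using mat_mult_left_right_inverse[of "transpose_mat Om" n Om] Omc by auto
  moreover have "col Om 0 = u" unfolding colOm[OF n0] ws0 f_def uu by simp
  ultimately show ?thesis using that Omc unfolding orth_mat_def by blast
qed

lemma orth_mat_mult:
  assumes O1: "orth_mat n O1" and O2: "orth_mat n O2"
  shows "orth_mat n (O1 * O2)"
proof -
  note a = orth_matD[OF O1] and b = orth_matD[OF O2]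
  have T: "transpose_mat (O1 * O2) = transpose_mat O2 * transpose_mat O1"
    using a b by (simp add: transpose_mult[of _ n n])
  have "transpose_mat (O1 * O2) * (O1 * O2) = transpose_mat O2 * (transpose_mat O1 * O1) * O2"
    unfolding T using a b by (simp add: assoc_mult_mat[of _ n n _ n _ n] orth_mat_cancel[OF O1] orth_mat_cancel[OF O2])
  moreover have "(O1 * O2) * transpose_mat (O1 * O2) = O1 * (O2 * transpose_mat O2) * transpose_mat O1"
    unfolding T using a b by (simp add: assoc_mult_mat[of _ n n _ n _ n] orth_mat_cancel[OF O1] orth_mat_cancel[OF O2])
  ultimately show ?thesis using a b unfolding orth_mat_def by (simp add: orth_mat_cancel[OF O1])
qed

lemma orth_mat_four_block:
  assumes O3: "orth_mat m O3"
  shows "orth_mat (Suc m) (four_block_mat (1\<^sub>m 1) (0\<^sub>m 1 m) (0\<^sub>m m 1) O3)"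
proof -
  note o = orth_matD[OF O3]
  let ?F = "four_block_mat (1\<^sub>m 1) (0\<^sub>m 1 m) (0\<^sub>m m 1) O3"
  have FT: "transpose_mat ?F = four_block_mat (1\<^sub>m 1) (0\<^sub>m 1 m) (0\<^sub>m m 1) (transpose_mat O3)"
    using o by (subst transpose_four_block_mat) auto
  have "?F \<in> carrier_mat (Suc m) (Suc m)"
    using o by (metis four_block_carrier_mat one_carrier_mat plus_1_eq_Suc)
  moreover have "transpose_mat ?F * ?F = 1\<^sub>m (Suc m)" "?F * transpose_mat ?F = 1\<^sub>m (Suc m)"
    unfolding FT using o by (subst mult_four_block_mat[of _ 1 1 _ m _ m _ _ 1 _ m]; auto)+
  ultimately show ?thesis unfolding orth_mat_def by blast
qed

text \<open>Conjugating by an orthogonal matrix whose first column is a unit eigenvector splits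
  off a \<open>1 \<times> 1\<close> block.\<close>

lemma sym_mat_deflate:
  assumes A: "A \<in> carrier_mat (Suc m) (Suc m)" and sym: "sym_mat A"
  obtains O1 l A3 where "orth_mat (Suc m) O1" "A3 \<in> carrier_mat m m" "sym_mat A3"
    "transpose_mat O1 * A * O1 = four_block_mat (mat 1 1 (\<lambda>_. l)) (0\<^sub>m 1 m) (0\<^sub>m m 1) A3"
proof -
  define n where "n = Suc m"
  have A: "A \<in> carrier_mat n n" using A n_def by simp
  have "n > 0" using n_def by simp
  then obtain l u where u: "u \<in> carrier_vec n" and uu: "u \<bullet> u = 1" and Au: "A *\<^sub>v u = l \<cdot>\<^sub>v u"
    using real_sym_unit_eigenvector[OF A sym] by blast
  obtain O1 where O1: "orth_mat n O1" and cO1: "col O1 0 = u" using orth_mat_with_first_col[OF u uu] by blast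
  note o = orth_matD[OF O1]
  define A' where "A' = transpose_mat O1 * A * O1"
  have A'c: "A' \<in> carrier_mat n n" unfolding A'_def using o A by simp
  have Tu: "transpose_mat O1 *\<^sub>v u = unit_vec n 0"
  proof -
    have "transpose_mat O1 *\<^sub>v u = col (transpose_mat O1 * O1) 0"
      using o n_def cO1 by (subst col_mult2) auto
    thus ?thesis using o n_def by simp
  qed
  have A'i0: "A' $$ (i,0) = (if i = 0 then l else 0)" if "i < n" for i
  proof -
    have "col A' 0 = (transpose_mat O1 * A) *\<^sub>v u"
      unfolding A'_def using o A n_def cO1 by (subst col_mult2) auto
    also have "\<dots> = l \<cdot>\<^sub>v unit_vec n 0" using o A u Au mult_mat_vec[OF o(2) u] Tu by simp
    finally have "col A' 0 = l \<cdot>\<^sub>v unit_vec n 0" .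
    moreover have "A' $$ (i,0) = col A' 0 $ i" using A'c that n_def by simp
    ultimately show ?thesis using that by simp
  qed
  have symA': "sym_mat A'" unfolding A'_def using sym_mat_congr[OF A sym o(1)] .
  have A'0j: "A' $$ (0,j) = (if j = 0 then l else 0)" if "j < n" for j
    using sym_matD[OF symA' A'c, of 0 j] A'i0[OF that] that n_def by simp
  define A3 where "A3 = mat m m (\<lambda>(i,j). A' $$ (Suc i, Suc j))"
  have "A3 \<in> carrier_mat m m" unfolding A3_def by simp
  moreover have "sym_mat A3" unfolding sym_mat_def A3_def
    by (rule eq_matI) (auto simp: sym_matD[OF symA' A'c] n_def)
  moreover have "A' = four_block_mat (mat 1 1 (\<lambda>_. l)) (0\<^sub>m 1 m) (0\<^sub>m m 1) A3"
  proof (rule eq_matI)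
    fix i j assume "i < dim_row (four_block_mat (mat 1 1 (\<lambda>_. l)) (0\<^sub>m 1 m) (0\<^sub>m m 1) A3)"
      and "j < dim_col (four_block_mat (mat 1 1 (\<lambda>_. l)) (0\<^sub>m 1 m) (0\<^sub>m m 1) A3)"
    hence i: "i < n" and j: "j < n" using n_def by (auto simp: A3_def)
    show "A' $$ (i,j) = four_block_mat (mat 1 1 (\<lambda>_. l)) (0\<^sub>m 1 m) (0\<^sub>m m 1) A3 $$ (i,j)"
    proof (cases "i = 0 \<or> j = 0")
      case True thus ?thesis using A'0j[OF j] A'i0[OF i] i j n_def by (auto simp: A3_def)
    next
      case False
      then obtain i0 j0 where "i = Suc i0" "j = Suc j0" by (cases i; cases j) auto
      thus ?thesis using i j n_def by (auto simp: A3_def)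
    qed
  qed (use A'c n_def in \<open>auto simp: A3_def\<close>)
  ultimately show ?thesis using that O1 n_def unfolding A'_def by blast
qed

lemma diagonal_mat_four_block:
  assumes D3: "D3 \<in> carrier_mat m m" "diagonal_mat D3"
  shows "diagonal_mat (four_block_mat (mat 1 1 (\<lambda>_. l)) (0\<^sub>m 1 m) (0\<^sub>m m 1) D3)"
    (is "diagonal_mat ?D")
  unfolding diagonal_mat_def
proof (intro allI impI)
  fix i j assume i: "i < dim_row ?D" and j: "j < dim_col ?D" and ij: "i \<noteq> j"
  show "?D $$ (i,j) = 0"
  proof (cases "i = 0 \<or> j = 0")
    case True thus ?thesis using i j ij D3 by auto
  next
    case False
    then obtain i0 j0 where "i = Suc i0" "j = Suc j0" by (cases i; cases j) auto
    thus ?thesis using i j ij D3 unfolding diagonal_mat_def by auto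
  qed
qed

lemma real_sym_diagonalization:
  assumes "A \<in> carrier_mat n n" "sym_mat A"
  shows "\<exists>Om D. orth_mat n Om \<and> D \<in> carrier_mat n n \<and> diagonal_mat D \<and> A = Om * D * transpose_mat Om"
  using assms
proof (induction n arbitrary: A)
  case 0
  have "A = 1\<^sub>m 0 * 0\<^sub>m 0 0 * transpose_mat (1\<^sub>m 0)"
    by (rule eq_matI) (use 0 in auto)
  moreover have "orth_mat 0 (1\<^sub>m 0)" by (simp add: orth_mat_def)
  moreover have "diagonal_mat (0\<^sub>m 0 0 :: real mat)" by (simp add: diagonal_mat_def)
  moreover have "(0\<^sub>m 0 0 :: real mat) \<in> carrier_mat 0 0" by simp
  ultimately show ?case by blast
next
  case (Suc m A)
  define n where "n = Suc m"
  obtain O1 l A3 where O1: "orth_mat n O1" and A3: "A3 \<in> carrier_mat m m" "sym_mat A3"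
    and A': "transpose_mat O1 * A * O1 = four_block_mat (mat 1 1 (\<lambda>_. l)) (0\<^sub>m 1 m) (0\<^sub>m m 1) A3"
    using sym_mat_deflate[OF Suc.prems] unfolding n_def by blast
  obtain O3 D3 where O3: "orth_mat m O3" and D3: "D3 \<in> carrier_mat m m" "diagonal_mat D3"
    and A3eq: "A3 = O3 * D3 * transpose_mat O3" using Suc.IH[OF A3] by blast
  note o3 = orth_matD[OF O3]
  define L where "L = mat 1 1 (\<lambda>_. l)"
  define F where "F = four_block_mat (1\<^sub>m 1) (0\<^sub>m 1 m) (0\<^sub>m m 1) O3"
  define D where "D = four_block_mat L (0\<^sub>m 1 m) (0\<^sub>m m 1) D3"
  have L: "L \<in> carrier_mat 1 1" unfolding L_def by simp
  have F: "orth_mat n F" unfolding F_def n_def using orth_mat_four_block[OF O3] .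
  note f = orth_matD[OF F]
  have Dc: "D \<in> carrier_mat n n" unfolding D_def n_def using D3 L
    by (metis four_block_carrier_mat plus_1_eq_Suc)
  have FT: "transpose_mat F = four_block_mat (1\<^sub>m 1) (0\<^sub>m 1 m) (0\<^sub>m m 1) (transpose_mat O3)"
    unfolding F_def using o3 by (subst transpose_four_block_mat) auto
  have "F * D * transpose_mat F = four_block_mat L (0\<^sub>m 1 m) (0\<^sub>m m 1) (O3 * D3) * transpose_mat F"
    unfolding F_def D_def using o3 D3 L by (subst mult_four_block_mat[of _ 1 1 _ m _ m _ _ 1 _ m]) auto
  also have "\<dots> = transpose_mat O1 * A * O1"
    unfolding FT A' A3eq L_def[symmetric] using o3 D3 L
    by (subst mult_four_block_mat[of _ 1 1 _ m _ m _ _ 1 _ m]) auto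
  finally have FDF: "F * D * transpose_mat F = transpose_mat O1 * A * O1" .
  note o1 = orth_matD[OF O1]
  have Ac: "A \<in> carrier_mat n n" using Suc.prems n_def by simp
  have "(O1 * F) * D * transpose_mat (O1 * F) = O1 * (F * D * transpose_mat F) * transpose_mat O1"
    using o1 f Dc by (simp add: transpose_mult[of _ n n] assoc_mult_mat[of _ n n _ n _ n])
  also have "\<dots> = (O1 * transpose_mat O1) * A * (O1 * transpose_mat O1)"
    unfolding FDF using o1 Ac
    by (simp add: assoc_mult_mat[of _ n n _ n _ n] mult_carrier_mat[of _ n n _ n] orth_mat_cancel[OF O1])
  finally have AOD: "A = (O1 * F) * D * transpose_mat (O1 * F)" using o1 Ac by (simp add: orth_mat_cancel[OF O1])
  have "diagonal_mat D" unfolding D_def L_def using diagonal_mat_four_block[OF D3] .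
  thus ?case using orth_mat_mult[OF O1 F] Dc AOD n_def by blast
qed

section \<open>Diagonal matrices and positive semi-definite square roots\<close>

lemma mat_diag_index[simp]:
  "i < n \<Longrightarrow> j < n \<Longrightarrow> mat_diag n f $$ (i,j) = (if i = j then f i else 0)"
  "dim_row (mat_diag n f) = n" "dim_col (mat_diag n f) = n"
  unfolding mat_diag_def by auto

lemma transpose_mat_diag[simp]: "transpose_mat (mat_diag n f) = mat_diag n f"
  by (rule eq_matI) auto

lemma mat_diag_quadratic_form:
  fixes f :: "nat \<Rightarrow> real"
  assumes x: "x \<in> carrier_vec n"
  shows "x \<bullet> (mat_diag n f *\<^sub>v x) = (\<Sum>i<n. f i * (x $ i)^2)"
proof -
  have "(mat_diag n f *\<^sub>v x) $ i = f i * x $ i" if i: "i < n" for i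
  proof -
    have "(mat_diag n f *\<^sub>v x) $ i = (\<Sum>k\<in>{0..<n}. mat_diag n f $$ (i,k) * x $ k)"
      using i x by (simp add: scalar_prod_def)
    also have "\<dots> = mat_diag n f $$ (i,i) * x $ i" by (rule sum_eq_single_term[of _ i]) (use i in auto)
    finally show ?thesis using i by simp
  qed
  thus ?thesis using x by (simp add: scalar_prod_def lessThan_atLeast0 power2_eq_square ac_simps)
qed

lemma diagonal_mat_eq_mat_diag:
  "D \<in> carrier_mat n n \<Longrightarrow> diagonal_mat D \<Longrightarrow> D = mat_diag n (\<lambda>i. D $$ (i,i))"
  by (rule eq_matI) (auto simp: diagonal_mat_def)

lemma real_sym_spectral:
  assumes "A \<in> carrier_mat n n" "sym_mat A"
  obtains Om f where "orth_mat n Om" "A = Om * mat_diag n f * transpose_mat Om"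
  using real_sym_diagonalization[OF assms] diagonal_mat_eq_mat_diag by metis

lemma orth_conj_cancel:
  assumes Om: "orth_mat n Om" and D: "D \<in> carrier_mat n n"
  shows "transpose_mat Om * (Om * D * transpose_mat Om) * Om = D"
proof -
  note o = orth_matD[OF Om]
  have "transpose_mat Om * (Om * D * transpose_mat Om) * Om
      = (transpose_mat Om * Om) * D * (transpose_mat Om * Om)"
    using o D by (simp add: assoc_mult_mat[of _ n n _ n _ n] mult_carrier_mat[of _ n n _ n]
        orth_mat_cancel[OF Om])
  thus ?thesis using o D by simp
qed

lemma psd_mat_diag_iff: "psd_mat n (mat_diag n f) \<longleftrightarrow> (\<forall>i<n. f i \<ge> 0)"
proof
  assume p: "psd_mat n (mat_diag n f)"
  show "\<forall>i<n. f i \<ge> 0"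
  proof (intro allI impI)
    fix i assume i: "i < n"
    have "(\<Sum>k<n. f k * (unit_vec n i $ k)^2) = f i * (unit_vec n i $ i)^2"
      by (rule sum_eq_single_term) (use i in auto)
    thus "f i \<ge> 0"
      using psd_matD(3)[OF p, of "unit_vec n i"] mat_diag_quadratic_form[of "unit_vec n i" n f] i
      by simp
  qed
next
  assume "\<forall>i<n. f i \<ge> 0"
  thus "psd_mat n (mat_diag n f)"
    unfolding psd_mat_def sym_mat_def by (auto simp: mat_diag_quadratic_form intro!: sum_nonneg)
qed

lemma pd_mat_diag:
  assumes f: "\<And>i. i < n \<Longrightarrow> f i > 0"
  shows "pd_mat n (mat_diag n f)"
  unfolding pd_mat_def
proof (intro conjI ballI impI)
  show "mat_diag n f \<in> carrier_mat n n" "sym_mat (mat_diag n f)" unfolding sym_mat_def by auto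
  fix x :: "real vec" assume x: "x \<in> carrier_vec n" and x0: "x \<noteq> 0\<^sub>v n"
  obtain k where k: "k < n" "x $ k \<noteq> 0" using x x0 by (metis carrier_vecD eq_vecI index_zero_vec)
  have "(\<Sum>i<n. f i * (x $ i)^2) \<ge> f k * (x $ k)^2"
    using k f by (intro member_le_sum) (auto intro!: mult_nonneg_nonneg simp: less_imp_le)
  moreover have "f k * (x $ k)^2 > 0" using k f by simp
  ultimately show "x \<bullet> (mat_diag n f *\<^sub>v x) > 0" unfolding mat_diag_quadratic_form[OF x] by linarith
qed

lemma psd_sqrt_exists:
  assumes A: "psd_mat n A"
  obtains M where "psd_mat n M" "M * M = A"
proof -
  obtain Om f where Om: "orth_mat n Om" and Aeq: "A = Om * mat_diag n f * transpose_mat Om"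
    using real_sym_spectral[OF psd_matD(1,2)[OF A]] by blast
  note o = orth_matD[OF Om]
  have "psd_mat n (mat_diag n f)"
    using psd_congr[OF A o(1)] unfolding Aeq orth_conj_cancel[OF Om mat_diag_dim] .
  hence f: "\<forall>i<n. f i \<ge> 0" unfolding psd_mat_diag_iff .
  define S where "S = mat_diag n (\<lambda>i. sqrt (f i))"
  have SS: "S * S = mat_diag n f" unfolding S_def mat_diag_diag using f
    by (intro eq_matI) (auto simp: mat_diag_def)
  have Sp: "psd_mat n S" unfolding S_def psd_mat_diag_iff using f by simp
  define M where "M = Om * S * transpose_mat Om"
  have "psd_mat n M" unfolding M_def using psd_congr[OF Sp o(2)] by simp
  moreover have "M * M = Om * (S * S) * transpose_mat Om"
    unfolding M_def using o Sp[THEN psd_matD(1)]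
    by (simp add: assoc_mult_mat[of _ n n _ n _ n] mult_carrier_mat[of _ n n _ n] orth_mat_cancel[OF Om])
  hence "M * M = A" unfolding SS Aeq .
  ultimately show ?thesis using that by blast
qed

lemma psd_quadratic_form_eq_0:
  assumes M: "psd_mat n M" and x: "x \<in> carrier_vec n" and z: "x \<bullet> (M *\<^sub>v x) = 0"
  shows "M *\<^sub>v x = 0\<^sub>v n"
proof -
  obtain R where R: "psd_mat n R" and RR: "R * R = M" using psd_sqrt_exists[OF M] by blast
  have Rc: "R \<in> carrier_mat n n" using psd_matD(1)[OF R] .
  have Rx: "R *\<^sub>v x \<in> carrier_vec n" using Rc x by simp
  have "x \<bullet> (M *\<^sub>v x) = x \<bullet> (R *\<^sub>v (R *\<^sub>v x))" unfolding RR[symmetric] using Rc x by simp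
  also have "\<dots> = (R *\<^sub>v x) \<bullet> (R *\<^sub>v x)" using sym_mat_scalar_prod[OF Rc psd_matD(2)[OF R] x Rx] .
  finally have "R *\<^sub>v x = 0\<^sub>v n" using z real_scalar_prod_self_eq_0[OF Rx] by simp
  thus ?thesis unfolding RR[symmetric] using Rc x by simp
qed

text \<open>For \<open>(M1 - M2) x = f x\<close> with \<open>a = M1 x\<close>, \<open>b = M2 x\<close> one gets
  \<open>f (x\<cdot>a + x\<cdot>b) = a\<cdot>a - b\<cdot>b = x\<cdot>(M1\<^sup>2 - M2\<^sup>2) x = 0\<close>, and both summands are non-negative.\<close>

lemma psd_square_eq_eigenvector_eq_0:
  assumes M1: "psd_mat n M1" and M2: "psd_mat n M2" and eq: "M1 * M1 = M2 * M2"
    and x: "x \<in> carrier_vec n" and Zx: "(M1 - M2) *\<^sub>v x = f \<cdot>\<^sub>v x" and f: "f \<noteq> 0"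
  shows "x = 0\<^sub>v n"
proof -
  have M1c: "M1 \<in> carrier_mat n n" and M2c: "M2 \<in> carrier_mat n n" using psd_matD(1) M1 M2 by auto
  define a where "a = M1 *\<^sub>v x"
  define b where "b = M2 *\<^sub>v x"
  have a: "a \<in> carrier_vec n" and b: "b \<in> carrier_vec n" unfolding a_def b_def using M1c M2c x by auto
  have Zab: "f \<cdot>\<^sub>v x = a - b" unfolding Zx[symmetric] a_def b_def using M1c M2c x
    by (simp add: minus_mult_distrib_mat_vec)
  have aa: "a \<bullet> a = x \<bullet> (M1 *\<^sub>v a)"
    using sym_mat_scalar_prod[OF M1c psd_matD(2)[OF M1] x a] unfolding a_def by simp
  have bb: "b \<bullet> b = x \<bullet> (M2 *\<^sub>v b)"
    using sym_mat_scalar_prod[OF M2c psd_matD(2)[OF M2] x b] unfolding b_def by simp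
  have "M1 *\<^sub>v a = M2 *\<^sub>v b" unfolding a_def b_def using M1c M2c x eq
    by (metis assoc_mult_mat_vec)
  hence aabb: "a \<bullet> a = b \<bullet> b" using aa bb by simp
  have ab: "a \<bullet> b = b \<bullet> a" using a b by (rule comm_scalar_prod)
  have "a \<bullet> (a - b) + (a - b) \<bullet> b = a \<bullet> a - b \<bullet> b"
    using a b ab by (simp add: scalar_prod_minus_distrib[of _ n] minus_scalar_prod_distrib[of _ n])
  hence "a \<bullet> (f \<cdot>\<^sub>v x) + (f \<cdot>\<^sub>v x) \<bullet> b = 0" using aabb Zab by simp
  hence "f * (a \<bullet> x + x \<bullet> b) = 0" using a b x by (simp add: algebra_simps)
  hence "a \<bullet> x + x \<bullet> b = 0" using f by simp
  moreover have "a \<bullet> x = x \<bullet> a" using a x by (rule comm_scalar_prod)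
  moreover have "x \<bullet> a \<ge> 0" "x \<bullet> b \<ge> 0" unfolding a_def b_def using psd_matD(3) M1 M2 x by auto
  ultimately have "x \<bullet> a = 0" and "x \<bullet> b = 0" by linarith+
  hence "a = 0\<^sub>v n" "b = 0\<^sub>v n"
    unfolding a_def b_def using psd_quadratic_form_eq_0[OF M1 x] psd_quadratic_form_eq_0[OF M2 x] by auto
  hence "f \<cdot>\<^sub>v x = 0\<^sub>v n" using Zab by simp
  hence "f * (x \<bullet> x) = 0" using x by (metis scalar_prod_left_zero smult_scalar_prod_distrib carrier_vecD)
  thus ?thesis using f real_scalar_prod_self_eq_0[OF x] by simp
qed

lemma psd_square_eq_imp_eq:
  assumes M1: "psd_mat n M1" and M2: "psd_mat n M2" and eq: "M1 * M1 = M2 * M2"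
  shows "M1 = M2"
proof -
  have M1c: "M1 \<in> carrier_mat n n" and M2c: "M2 \<in> carrier_mat n n" using psd_matD(1) M1 M2 by auto
  define Z where "Z = M1 - M2"
  have Zc: "Z \<in> carrier_mat n n" unfolding Z_def using M2c by (rule minus_carrier_mat)
  have symZ: "sym_mat Z" unfolding Z_def sym_mat_def using M1c M2c psd_matD(2)[OF M1] psd_matD(2)[OF M2]
    by (simp add: transpose_minus sym_mat_def)
  obtain Om f where Om: "orth_mat n Om" and Zeq: "Z = Om * mat_diag n f * transpose_mat Om"
    using real_sym_spectral[OF Zc symZ] by blast
  note o = orth_matD[OF Om]
  have ZO: "Z * Om = Om * mat_diag n f"
    unfolding Zeq using o by (simp add: assoc_mult_mat[of _ n n _ n _ n] mult_carrier_mat[of _ n n _ n])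
  have f0: "f k = 0" if k: "k < n" for k
  proof (rule ccontr)
    assume fk: "f k \<noteq> 0"
    define x where "x = col Om k"
    have x: "x \<in> carrier_vec n" unfolding x_def using o k by simp
    have "x \<bullet> x = (transpose_mat Om * Om) $$ (k,k)" unfolding x_def using o(1) k by simp
    hence xx: "x \<bullet> x = 1" using o(4) k by simp
    have "Z *\<^sub>v x = col (Z * Om) k" unfolding x_def using o Zc k by (subst col_mult2) auto
    also have "\<dots> = Om *\<^sub>v col (mat_diag n f) k" unfolding ZO using o k by (subst col_mult2) auto
    also have "col (mat_diag n f) k = f k \<cdot>\<^sub>v unit_vec n k" using k by (intro eq_vecI) auto
    also have "Om *\<^sub>v (f k \<cdot>\<^sub>v unit_vec n k) = f k \<cdot>\<^sub>v x"
      unfolding x_def using mult_mat_vec[OF o(1), of "unit_vec n k" "f k"] mult_mat_vec_unit_vec[OF o(1) k]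
      by simp
    finally have "x = 0\<^sub>v n" using psd_square_eq_eigenvector_eq_0[OF M1 M2 eq x _ fk] unfolding Z_def by blast
    thus False using xx by simp
  qed
  have "mat_diag n f = 0\<^sub>m n n" using f0 by (intro eq_matI) auto
  hence "Z = 0\<^sub>m n n" unfolding Zeq using o by simp
  thus ?thesis unfolding Z_def using mat_eq_of_minus_eq_0[OF M1c M2c] by simp
qed

lemma psd_sqrt:
  assumes A: "psd_mat n A"
  shows "psd_mat n (psd_sqrt A)" "psd_sqrt A * psd_sqrt A = A"
proof -
  have dr: "dim_row A = n" using psd_matD(1)[OF A] by simp
  have ex: "\<exists>!M. psd_mat (dim_row A) M \<and> M * M = A"
    unfolding dr using psd_sqrt_exists[OF A] psd_square_eq_imp_eq by metis
  have "psd_mat (dim_row A) (psd_sqrt A) \<and> psd_sqrt A * psd_sqrt A = A"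
    unfolding psd_sqrt_def by (rule theI'[OF ex])
  thus "psd_mat n (psd_sqrt A)" "psd_sqrt A * psd_sqrt A = A" unfolding dr by auto
qed

lemma psd_sqrt_unique:
  assumes "psd_mat n A" "psd_mat n M" "M * M = A"
  shows "psd_sqrt A = M"
  using psd_square_eq_imp_eq[OF psd_sqrt(1)[OF assms(1)] assms(2)] psd_sqrt(2)[OF assms(1)] assms(3)
  by simp

lemma psd_sqrt_carrier: "psd_mat n A \<Longrightarrow> psd_sqrt A \<in> carrier_mat n n"
  using psd_sqrt(1) psd_matD(1) by blast

lemma pd_psd_sqrt:
  assumes A: "pd_mat n A"
  shows "pd_mat n (psd_sqrt A)"
proof -
  note R = psd_sqrt[OF pd_imp_psd[OF A]]
  have Rc: "psd_sqrt A \<in> carrier_mat n n" using psd_matD(1)[OF R(1)] .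
  show ?thesis unfolding pd_mat_def
  proof (intro conjI ballI impI)
    show "psd_sqrt A \<in> carrier_mat n n" "sym_mat (psd_sqrt A)" using psd_matD[OF R(1)] by auto
    fix v :: "real vec" assume v: "v \<in> carrier_vec n" and v0: "v \<noteq> 0\<^sub>v n"
    have ge: "v \<bullet> (psd_sqrt A *\<^sub>v v) \<ge> 0" using psd_matD(3)[OF R(1) v] .
    show "v \<bullet> (psd_sqrt A *\<^sub>v v) > 0"
    proof (rule ccontr)
      assume "\<not> ?thesis"
      hence "psd_sqrt A *\<^sub>v v = 0\<^sub>v n" using ge psd_quadratic_form_eq_0[OF R(1) v] by simp
      moreover have "A *\<^sub>v v = psd_sqrt A *\<^sub>v (psd_sqrt A *\<^sub>v v)"
        using R(2) Rc v by (metis assoc_mult_mat_vec)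
      ultimately have "v \<bullet> (A *\<^sub>v v) = 0" using Rc v by simp
      thus False using pd_matD(3)[OF A v v0] by simp
    qed
  qed
qed

lemma pd_psd_sqrt_inverse:
  assumes C: "pd_mat n C"
  obtains Ki where "pd_mat n (psd_sqrt C)" "psd_sqrt C * psd_sqrt C = C" "Ki \<in> carrier_mat n n"
    "psd_sqrt C * Ki = 1\<^sub>m n" "Ki * psd_sqrt C = 1\<^sub>m n"
proof -
  have K: "pd_mat n (psd_sqrt C)" using pd_psd_sqrt[OF C] .
  obtain Ki where "pd_mat n Ki" "psd_sqrt C * Ki = 1\<^sub>m n" "Ki * psd_sqrt C = 1\<^sub>m n"
    using pd_inverse[OF K] by blast
  thus ?thesis using that K psd_sqrt(2)[OF pd_imp_psd[OF C]] pd_matD(1) by blast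
qed

section \<open>The Bures functional\<close>

lemma mtrace_congr_pd:
  assumes P: "pd_mat n P" and Z: "Z \<in> carrier_mat n n"
  shows "mtrace (transpose_mat Z * P * Z) \<ge> 0"
    "mtrace (transpose_mat Z * P * Z) = 0 \<Longrightarrow> Z = 0\<^sub>m n n"
proof -
  have Pc: "P \<in> carrier_mat n n" using pd_matD(1)[OF P] .
  have M: "transpose_mat Z * P * Z \<in> carrier_mat n n" using Pc Z by simp
  have e: "(transpose_mat Z * P * Z) $$ (k,k) = col Z k \<bullet> (P *\<^sub>v col Z k)" if k: "k < n" for k
    unfolding mat_diag_entry_eq_quadratic_form[OF M k] quadratic_form_congr[OF Pc Z unit_vec_carrier]
      mult_mat_vec_unit_vec[OF Z k] ..
  have ge: "col Z k \<bullet> (P *\<^sub>v col Z k) \<ge> 0" if k: "k < n" for k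
    using pd_imp_psd[OF P] psd_matD(3) Z k by (metis col_carrier_vec carrier_matD(1))
  have tr: "mtrace (transpose_mat Z * P * Z) = (\<Sum>k<n. col Z k \<bullet> (P *\<^sub>v col Z k))"
    unfolding mtrace_def using M e by (intro sum.cong) auto
  show "mtrace (transpose_mat Z * P * Z) \<ge> 0" unfolding tr using ge by (intro sum_nonneg) simp
  assume "mtrace (transpose_mat Z * P * Z) = 0"
  hence "\<forall>k\<in>{..<n}. col Z k \<bullet> (P *\<^sub>v col Z k) = 0"
    unfolding tr by (subst sum_nonneg_eq_0_iff[symmetric]) (use ge in auto)
  hence c0: "col Z k = 0\<^sub>v n" if "k < n" for k
    using pd_matD(3)[OF P, of "col Z k"] that Z by fastforce
  show "Z = 0\<^sub>m n n"
  proof (rule eq_matI)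
    fix i j assume "i < dim_row (0\<^sub>m n n)" "j < dim_col (0\<^sub>m n n)"
    hence i: "i < n" and j: "j < n" by auto
    have "Z $$ (i,j) = col Z j $ i" using Z i j by simp
    thus "Z $$ (i,j) = 0\<^sub>m n n $$ (i,j)" using c0[OF j] i j by simp
  qed (use Z in auto)
qed

text \<open>With \<open>R = X\<^sup>1\<^sup>/\<^sup>2\<close> the left-hand side is \<open>tr ((R - Y) Y\<^sup>-\<^sup>1 (R - Y)) \<ge> 0\<close>.\<close>

lemma bures_trace_ineq:
  assumes Y: "pd_mat n Y" and Yi: "pd_mat n Yi" and YYi: "Y * Yi = 1\<^sub>m n" and YiY: "Yi * Y = 1\<^sub>m n"
    and X: "psd_mat n X"
  shows "mtrace (X * Yi) + mtrace Y - 2 * mtrace (psd_sqrt X) \<ge> 0"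
    "mtrace (X * Yi) + mtrace Y - 2 * mtrace (psd_sqrt X) = 0 \<Longrightarrow> psd_sqrt X = Y"
proof -
  define R where "R = psd_sqrt X"
  have Rc: "R \<in> carrier_mat n n" unfolding R_def using psd_sqrt_carrier[OF X] .
  have RR: "R * R = X" unfolding R_def using psd_sqrt(2)[OF X] .
  have symR: "sym_mat R" unfolding R_def using psd_matD(2)[OF psd_sqrt(1)[OF X]] .
  have Yc: "Y \<in> carrier_mat n n" and Yic: "Yi \<in> carrier_mat n n" using pd_matD(1) Y Yi by auto
  define Z where "Z = R - Y"
  have Zc: "Z \<in> carrier_mat n n" unfolding Z_def using Yc by (rule minus_carrier_mat)
  have ZT: "transpose_mat Z = Z" unfolding Z_def using Rc Yc symR pd_matD(2)[OF Y]
    by (simp add: transpose_minus sym_mat_def)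
  have ZYi: "Z * Yi = R * Yi - 1\<^sub>m n"
    unfolding Z_def using minus_mult_distrib_mat[OF Rc Yc Yic] YYi by simp
  have RYic: "R * Yi \<in> carrier_mat n n" using Rc Yic by simp
  have "mtrace (Z * Yi * Z) = mtrace (R * Yi * Z - Z)"
    unfolding ZYi using minus_mult_distrib_mat[OF RYic one_carrier_mat Zc] Zc by simp
  also have "\<dots> = mtrace (R * Yi * R - R * Yi * Y) - mtrace Z"
    unfolding Z_def using mult_minus_distrib_mat[OF RYic Rc Yc] mtrace_minus RYic Rc Yc
    by (metis minus_carrier_mat mult_carrier_mat)
  also have "R * Yi * Y = R" using Rc Yic Yc YiY by simp
  also have "mtrace (R * Yi * R - R) = mtrace (R * (R * Yi)) - mtrace R"
    using mtrace_minus[of "R * Yi * R" n R] mtrace_mult_comm[OF RYic Rc] RYic Rc by simp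
  also have "R * (R * Yi) = X * Yi" using Rc Yic RR by (simp flip: RR)
  also have "mtrace Z = mtrace R - mtrace Y" unfolding Z_def using mtrace_minus Rc Yc by blast
  finally have id: "mtrace (transpose_mat Z * Yi * Z) = mtrace (X * Yi) + mtrace Y - 2 * mtrace R"
    unfolding ZT by simp
  show "mtrace (X * Yi) + mtrace Y - 2 * mtrace (psd_sqrt X) \<ge> 0"
    using mtrace_congr_pd(1)[OF Yi Zc] unfolding id R_def .
  assume "mtrace (X * Yi) + mtrace Y - 2 * mtrace (psd_sqrt X) = 0"
  hence "Z = 0\<^sub>m n n" using mtrace_congr_pd(2)[OF Yi Zc] unfolding id R_def by simp
  thus "psd_sqrt X = Y" unfolding Z_def R_def[symmetric] using mat_eq_of_minus_eq_0[OF Rc Yc] by simp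
qed

lemma bures_trace_ineq_congr:
  assumes C: "pd_mat n C" and S: "pd_mat n S"
  shows "2 * mtrace (psd_sqrt (psd_sqrt C * S * psd_sqrt C)) \<le> mtrace C + mtrace S"
proof -
  define K where "K = psd_sqrt C"
  obtain Ki where K: "pd_mat n K" and KK: "K * K = C" and Kic: "Ki \<in> carrier_mat n n"
    and KiK: "Ki * K = 1\<^sub>m n" using pd_psd_sqrt_inverse[OF C] unfolding K_def by blast
  obtain Ci where Ci: "pd_mat n Ci" and CCi: "C * Ci = 1\<^sub>m n" and CiC: "Ci * C = 1\<^sub>m n"
    using pd_inverse[OF C] by blast
  have Kc: "K \<in> carrier_mat n n" and Cic: "Ci \<in> carrier_mat n n" and Sc: "S \<in> carrier_mat n n"
    using pd_matD(1) K Ci S by auto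
  have KCi: "K * Ci = Ki"
  proof -
    have "Ki = Ki * (K * K * Ci)" using KK CCi Kic by simp
    also have "\<dots> = (Ki * K) * (K * Ci)" using Kic Kc Cic
      by (simp add: assoc_mult_mat[of _ n n _ n _ n] mult_carrier_mat[of _ n n _ n])
    finally show ?thesis using KiK Kc Cic by simp
  qed
  have "mtrace (K * S * K * Ci) = mtrace (K * (S * Ki))" using Kc Sc Cic KCi
    by (simp add: assoc_mult_mat[of _ n n _ n _ n] mult_carrier_mat[of _ n n _ n])
  also have "\<dots> = mtrace ((S * Ki) * K)" using mtrace_mult_comm[of K n n "S * Ki"] Kc Sc Kic by simp
  also have "\<dots> = mtrace S" using Sc Kic Kc KiK by simp
  finally have "mtrace (K * S * K * Ci) = mtrace S" .
  thus ?thesis using bures_trace_ineq(1)[OF C Ci CCi CiC pd_imp_psd[OF pd_congr_sym[OF K S]]]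
    unfolding K_def by linarith
qed

lemma wdist_squared:
  assumes "pd_mat n C" "pd_mat n S"
  shows "(wdist C S)\<^sup>2 = mtrace C + mtrace S - 2 * mtrace (psd_sqrt (psd_sqrt C * S * psd_sqrt C))"
  unfolding wdist_def using bures_trace_ineq_congr[OF assms] by simp

text \<open>Strict midpoint concavity of \<open>S \<mapsto> tr (C\<^sup>1\<^sup>/\<^sup>2 S C\<^sup>1\<^sup>/\<^sup>2)\<^sup>1\<^sup>/\<^sup>2\<close>: compare both endpoints with
  the square root \<open>Y\<close> of the midpoint through the equality case of the Bures inequality.\<close>

lemma mtrace_psd_sqrt_strict_midpoint_concave:
  assumes C: "pd_mat n C" and S0: "pd_mat n S0" and S1: "pd_mat n S1" and ne: "S0 \<noteq> S1"
  shows "mtrace (psd_sqrt (psd_sqrt C * S0 * psd_sqrt C)) + mtrace (psd_sqrt (psd_sqrt C * S1 * psd_sqrt C))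
    < 2 * mtrace (psd_sqrt (psd_sqrt C * ((1/2) \<cdot>\<^sub>m (S0 + S1)) * psd_sqrt C))"
proof -
  define K where "K = psd_sqrt C"
  obtain Ki where K: "pd_mat n K" and Kic: "Ki \<in> carrier_mat n n"
    and KKi: "K * Ki = 1\<^sub>m n" and KiK: "Ki * K = 1\<^sub>m n" using pd_psd_sqrt_inverse[OF C] unfolding K_def by blast
  have Kc: "K \<in> carrier_mat n n" and S0c: "S0 \<in> carrier_mat n n" and S1c: "S1 \<in> carrier_mat n n"
    using pd_matD(1) K S0 S1 by auto
  define X0 where "X0 = K * S0 * K"
  define X1 where "X1 = K * S1 * K"
  define Xm where "Xm = K * ((1/2) \<cdot>\<^sub>m (S0 + S1)) * K"
  have X0: "pd_mat n X0" unfolding X0_def using pd_congr_sym[OF K S0] .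
  have X1: "pd_mat n X1" unfolding X1_def using pd_congr_sym[OF K S1] .
  have Xm: "pd_mat n Xm" unfolding Xm_def using pd_congr_sym[OF K pd_midpoint[OF S0 S1]] .
  have X0c: "X0 \<in> carrier_mat n n" and X1c: "X1 \<in> carrier_mat n n" using pd_matD(1) X0 X1 by auto
  have S01: "S0 + S1 \<in> carrier_mat n n" using S1c by simp
  have "X0 + X1 = K * (S0 + S1) * K"
    unfolding X0_def X1_def using Kc S0c S1c
    by (simp add: add_mult_distrib_mat[of _ n n] mult_add_distrib_mat[of _ n n] mult_carrier_mat[of _ n n _ n])
  also have "\<dots> = 2 \<cdot>\<^sub>m Xm"
    unfolding Xm_def using mult_smult_distrib[OF Kc S01, of "1/2"] Kc S01
      mult_smult_assoc_mat[of "K * (S0 + S1)" n n K n "1/2"]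
    by (intro eq_matI) auto
  finally have Xsum: "X0 + X1 = 2 \<cdot>\<^sub>m Xm" .
  define Y where "Y = psd_sqrt Xm"
  have Y: "pd_mat n Y" unfolding Y_def using pd_psd_sqrt[OF Xm] .
  have YY: "Y * Y = Xm" unfolding Y_def using psd_sqrt(2)[OF pd_imp_psd[OF Xm]] .
  obtain Yi where Yi: "pd_mat n Yi" and YYi: "Y * Yi = 1\<^sub>m n" and YiY: "Yi * Y = 1\<^sub>m n"
    using pd_inverse[OF Y] by blast
  have Yc: "Y \<in> carrier_mat n n" and Yic: "Yi \<in> carrier_mat n n" using pd_matD(1) Y Yi by auto
  note i0 = bures_trace_ineq[OF Y Yi YYi YiY pd_imp_psd[OF X0]]
  note i1 = bures_trace_ineq[OF Y Yi YYi YiY pd_imp_psd[OF X1]]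
  have "mtrace (X0 * Yi) + mtrace (X1 * Yi) = mtrace ((2 \<cdot>\<^sub>m Xm) * Yi)"
    using X0c X1c Yic by (simp add: add_mult_distrib_mat[of _ n n] mtrace_add[of _ n] flip: Xsum)
  also have "\<dots> = 2 * mtrace (Y * Y * Yi)"
    using Yc Yic by (simp add: mult_smult_assoc_mat[of _ n n] mtrace_smult[of _ n] flip: YY)
  also have "Y * Y * Yi = Y" using Yc Yic YYi by simp
  finally have trs: "mtrace (X0 * Yi) + mtrace (X1 * Yi) = 2 * mtrace Y" .
  have "mtrace (psd_sqrt X0) + mtrace (psd_sqrt X1) < 2 * mtrace Y"
  proof (rule ccontr)
    assume "\<not> ?thesis"
    hence "mtrace (X0 * Yi) + mtrace Y - 2 * mtrace (psd_sqrt X0) = 0"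
      "mtrace (X1 * Yi) + mtrace Y - 2 * mtrace (psd_sqrt X1) = 0" using i0(1) i1(1) trs by linarith+
    hence "psd_sqrt X0 = Y" "psd_sqrt X1 = Y" using i0(2) i1(2) by auto
    hence "X0 = X1" using psd_sqrt(2)[OF pd_imp_psd[OF X0]] psd_sqrt(2)[OF pd_imp_psd[OF X1]] by metis
    hence "Ki * X0 * Ki = Ki * X1 * Ki" by simp
    moreover have "Ki * (K * S * K) * Ki = S" if "S \<in> carrier_mat n n" for S
    proof -
      have "Ki * (K * S * K) * Ki = (Ki * K) * S * (K * Ki)" using that Kc Kic
        by (simp add: assoc_mult_mat[of _ n n _ n _ n] mult_carrier_mat[of _ n n _ n])
      thus ?thesis using KiK KKi that by simp
    qed
    ultimately show False using ne S0c S1c unfolding X0_def X1_def by metis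
  qed
  thus ?thesis unfolding Y_def Xm_def X0_def X1_def K_def .
qed

section \<open>Symmetries of the Wasserstein mean\<close>

definition sym_involution :: "nat \<Rightarrow> real mat \<Rightarrow> bool" where
  "sym_involution n D \<longleftrightarrow> D \<in> carrier_mat n n \<and> D * D = 1\<^sub>m n \<and> transpose_mat D = D"

lemma sym_involutionD:
  "sym_involution n D \<Longrightarrow> D \<in> carrier_mat n n"
  "sym_involution n D \<Longrightarrow> D * D = 1\<^sub>m n"
  "sym_involution n D \<Longrightarrow> transpose_mat D = D"
  unfolding sym_involution_def by auto

lemma sym_involution_orth: "sym_involution n D \<Longrightarrow> orth_mat n D"
  unfolding sym_involution_def orth_mat_def by auto

lemma sym_involution_cancel:
  "sym_involution n D \<Longrightarrow> dim_row Z = n \<Longrightarrow> D * (D * Z) = Z"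
  using orth_mat_cancel(1)[OF sym_involution_orth] sym_involutionD(3) by metis

lemma sym_involution_conj_square:
  assumes D: "sym_involution n D" and X: "X \<in> carrier_mat n n"
  shows "(D * X * D) * (D * X * D) = D * (X * X) * D"
  using sym_involutionD[OF D] X by (simp add: assoc_mult_mat[of _ n n _ n _ n] sym_involution_cancel[OF D])

lemma psd_sqrt_conj_involution:
  assumes X: "psd_mat n X" and D: "sym_involution n D"
  shows "psd_sqrt (D * X * D) = D * psd_sqrt X * D"
proof -
  note d = sym_involutionD[OF D]
  have "psd_mat n (D * X * D)" "psd_mat n (D * psd_sqrt X * D)"
    using psd_congr[OF X d(1)] psd_congr[OF psd_sqrt(1)[OF X] d(1)] d(3) by simp_all
  thus ?thesis using psd_sqrt_unique sym_involution_conj_square[OF D psd_sqrt_carrier[OF X]]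
      psd_sqrt(2)[OF X] by metis
qed

lemma mtrace_conj_involution:
  assumes D: "sym_involution n D" and M: "M \<in> carrier_mat n n"
  shows "mtrace (D * M * D) = mtrace M"
proof -
  note d = sym_involutionD[OF D]
  have "mtrace (D * M * D) = mtrace (D * (M * D))" using d M by simp
  also have "\<dots> = mtrace ((M * D) * D)" using mtrace_mult_comm[of D n n "M * D"] d M by simp
  also have "\<dots> = mtrace M" using d M by simp
  finally show ?thesis .
qed

lemma wdist_conj_involution:
  assumes C: "pd_mat n C" and S: "pd_mat n S" and D: "sym_involution n D" and DCD: "D * C * D = C"
  shows "wdist C (D * S * D) = wdist C S"
proof -
  note d = sym_involutionD[OF D]
  define K where "K = psd_sqrt C"
  have K: "psd_mat n K" unfolding K_def using psd_sqrt[OF pd_imp_psd[OF C]] by auto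
  have Kc: "K \<in> carrier_mat n n" and Sc: "S \<in> carrier_mat n n" using psd_matD(1)[OF K] pd_matD(1)[OF S] .
  have K_conj: "D * K * D = K" unfolding K_def
    using psd_sqrt_conj_involution[OF pd_imp_psd[OF C] D] DCD by simp
  have "K * (D * S * D) * K = (D * K * D) * (D * S * D) * (D * K * D)" unfolding K_conj ..
  also have "\<dots> = D * (K * S * K) * D"
    using d Kc Sc by (simp add: assoc_mult_mat[of _ n n _ n _ n] sym_involution_cancel[OF D])
  finally have KDSDK: "K * (D * S * D) * K = D * (K * S * K) * D" .
  have KSK: "psd_mat n (K * S * K)" using psd_congr[OF pd_imp_psd[OF S] Kc] psd_matD(2)[OF K]
    unfolding sym_mat_def by simp
  have "mtrace (psd_sqrt (K * (D * S * D) * K)) = mtrace (psd_sqrt (K * S * K))"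
    unfolding KDSDK psd_sqrt_conj_involution[OF KSK D]
    using mtrace_conj_involution[OF D psd_sqrt_carrier[OF KSK]] .
  thus ?thesis unfolding wdist_def K_def[symmetric] using mtrace_conj_involution[OF D Sc] by simp
qed

text \<open>If a symmetry fixed every \<open>C\<^sub>i\<close> but moved the mean, the midpoint of the mean and its image
  would have the same trace and, by strict concavity, a strictly smaller cost.\<close>

lemma wasserstein_mean_conj_involution:
  assumes mean: "is_wasserstein_mean n N C Cbar" and N: "N \<ge> 1"
    and Cpd: "\<And>i. i < N \<Longrightarrow> pd_mat n (C i)"
    and D: "sym_involution n D" and DCD: "\<And>i. i < N \<Longrightarrow> D * C i * D = C i"
  shows "D * Cbar * D = Cbar"
proof (rule ccontr)
  assume ne: "D * Cbar * D \<noteq> Cbar"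
  note d = sym_involutionD[OF D]
  have Cb: "pd_mat n Cbar" and mini: "\<And>S. pd_mat n S \<Longrightarrow>
        (\<Sum>i<N. (wdist (C i) Cbar)\<^sup>2) \<le> (\<Sum>i<N. (wdist (C i) S)\<^sup>2)"
    using mean unfolding is_wasserstein_mean_def by auto
  have Cbc: "Cbar \<in> carrier_mat n n" using pd_matD(1)[OF Cb] .
  define S1 where "S1 = D * Cbar * D"
  have S1: "pd_mat n S1" unfolding S1_def
    using pd_congr[OF Cb d(1) orth_mat_inj[OF sym_involution_orth[OF D]]] d(3) by simp
  have S1c: "S1 \<in> carrier_mat n n" using pd_matD(1)[OF S1] .
  define Sm where "Sm = (1/2) \<cdot>\<^sub>m (Cbar + S1)"
  have Sm: "pd_mat n Sm" unfolding Sm_def using pd_midpoint[OF Cb S1] .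
  have trS1: "mtrace S1 = mtrace Cbar" unfolding S1_def using mtrace_conj_involution[OF D Cbc] .
  have trSm: "mtrace Sm = mtrace Cbar"
    unfolding Sm_def using mtrace_smult[of "Cbar + S1" n "1/2"] mtrace_add[OF Cbc S1c] S1c trS1 by simp
  have lt: "(wdist (C i) Sm)\<^sup>2 < (wdist (C i) Cbar)\<^sup>2" if i: "i < N" for i
  proof -
    define g where "g S = mtrace (psd_sqrt (psd_sqrt (C i) * S * psd_sqrt (C i)))" for S
    have "wdist (C i) S1 = wdist (C i) Cbar"
      unfolding S1_def using wdist_conj_involution[OF Cpd[OF i] Cb D DCD[OF i]] .
    hence "g S1 = g Cbar"
      using wdist_squared[OF Cpd[OF i] S1] wdist_squared[OF Cpd[OF i] Cb] trS1 unfolding g_def by auto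
    moreover have "g Cbar + g S1 < 2 * g Sm"
      using mtrace_psd_sqrt_strict_midpoint_concave[OF Cpd[OF i] Cb S1] ne
      unfolding g_def Sm_def S1_def by metis
    ultimately show ?thesis
      using wdist_squared[OF Cpd[OF i] Sm] wdist_squared[OF Cpd[OF i] Cb] trSm unfolding g_def by simp
  qed
  have "(\<Sum>i<N. (wdist (C i) Sm)\<^sup>2) < (\<Sum>i<N. (wdist (C i) Cbar)\<^sup>2)"
    using N lt by (intro sum_strict_mono) (auto simp: lessThan_empty_iff)
  thus False using mini[OF Sm] by simp
qed

section \<open>Optimal transport maps\<close>

text \<open>Conjugating by \<open>Cb\<^sup>1\<^sup>/\<^sup>2\<close> reduces uniqueness of the transport map to that of the
  positive semi-definite square root.\<close>

lemma psd_transport_unique: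
  assumes T1: "psd_mat n T1" and T2: "psd_mat n T2" and Cb: "pd_mat n Cb"
    and eq: "T1 * Cb * T1 = T2 * Cb * T2"
  shows "T1 = T2"
proof -
  define G where "G = psd_sqrt Cb"
  obtain Gi where G: "pd_mat n G" and GG: "G * G = Cb" and Gic: "Gi \<in> carrier_mat n n"
    and GGi: "G * Gi = 1\<^sub>m n" and GiG: "Gi * G = 1\<^sub>m n"
    using pd_psd_sqrt_inverse[OF Cb] unfolding G_def by blast
  have Gc: "G \<in> carrier_mat n n" using pd_matD(1)[OF G] .
  have GT: "transpose_mat G = G" using pd_matD(2)[OF G] unfolding sym_mat_def .
  have T1c: "T1 \<in> carrier_mat n n" and T2c: "T2 \<in> carrier_mat n n" using psd_matD(1) T1 T2 by auto
  have p1: "psd_mat n (G * T1 * G)" using psd_congr[OF T1 Gc] GT by simp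
  have p2: "psd_mat n (G * T2 * G)" using psd_congr[OF T2 Gc] GT by simp
  have sq: "(G * T * G) * (G * T * G) = G * (T * Cb * T) * G" if "T \<in> carrier_mat n n" for T
    unfolding GG[symmetric] using that Gc
    by (simp add: assoc_mult_mat[of _ n n _ n _ n] mult_carrier_mat[of _ n n _ n])
  have "G * T1 * G = G * T2 * G" using psd_square_eq_imp_eq[OF p1 p2] sq[OF T1c] sq[OF T2c] eq by simp
  moreover have "Gi * (G * T * G) * Gi = T" if "T \<in> carrier_mat n n" for T
  proof -
    have "Gi * (G * T * G) * Gi = (Gi * G) * T * (G * Gi)" using that Gc Gic
      by (simp add: assoc_mult_mat[of _ n n _ n _ n] mult_carrier_mat[of _ n n _ n])
    thus ?thesis using GiG GGi that by simp
  qed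
  ultimately show ?thesis using T1c T2c by metis
qed

lemma psd_transport_conj_involution:
  assumes T: "psd_mat n T" and Cb: "pd_mat n Cb" and D: "sym_involution n D"
    and DCbD: "D * Cb * D = Cb" and DCD: "D * (T * Cb * T) * D = T * Cb * T"
  shows "D * T * D = T"
proof -
  note d = sym_involutionD[OF D]
  have Tc: "T \<in> carrier_mat n n" and Cbc: "Cb \<in> carrier_mat n n" using psd_matD(1)[OF T] pd_matD(1)[OF Cb] .
  have "(D * T * D) * Cb * (D * T * D) = D * T * (D * Cb * D) * T * D"
    using d Tc Cbc by (simp add: assoc_mult_mat[of _ n n _ n _ n] mult_carrier_mat[of _ n n _ n])
  also have "\<dots> = D * (T * Cb * T) * D"
    unfolding DCbD using d Tc Cbc by (simp add: assoc_mult_mat[of _ n n _ n _ n] mult_carrier_mat[of _ n n _ n])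
  finally have "(D * T * D) * Cb * (D * T * D) = T * Cb * T" unfolding DCD .
  moreover have "psd_mat n (D * T * D)" using psd_congr[OF T d(1)] d(3) by simp
  ultimately show ?thesis using psd_transport_unique[OF _ T Cb] by blast
qed

lemma pd_gram_transpose_inj:
  assumes Y: "Y \<in> carrier_mat n n" and pd: "pd_mat n (Y * transpose_mat Y)"
    and x: "x \<in> carrier_vec n" and Yx: "transpose_mat Y *\<^sub>v x = 0\<^sub>v n"
  shows "x = 0\<^sub>v n"
proof -
  have "(Y * transpose_mat Y) *\<^sub>v x = Y *\<^sub>v (transpose_mat Y *\<^sub>v x)"
    using Y x by (intro assoc_mult_mat_vec[of _ n n _ n]) auto
  thus ?thesis using Yx Y pd_mat_inj[OF pd x] by simp
qed

definition is_svd :: "nat \<Rightarrow> real mat \<Rightarrow> real mat \<Rightarrow> real mat \<Rightarrow> real mat \<Rightarrow> bool" where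
  "is_svd n X U \<Sigma> V \<longleftrightarrow> orth_mat n U \<and> orth_mat n V \<and> \<Sigma> \<in> carrier_mat n n \<and> diagonal_mat \<Sigma>
     \<and> (\<forall>k<n. \<Sigma> $$ (k,k) \<ge> 0) \<and> X = U * \<Sigma> * transpose_mat V"

text \<open>The Procrustes alignment \<open>Q = V U\<^sup>T\<close> of \<open>Y\<close> to \<open>Ybar\<close> turns \<open>Y Q\<close> into \<open>T Ybar\<close>, where
  \<open>T = Ybar\<^sup>-\<^sup>T (U \<Sigma> U\<^sup>T) Ybar\<^sup>-\<^sup>1\<close> is the transport map from \<open>Ybar Ybar\<^sup>T\<close> to \<open>Y Y\<^sup>T\<close>.\<close>

lemma procrustes_alignment_transport:
  assumes Cb: "pd_mat n Cb" and Ybc: "Ybar \<in> carrier_mat n n" and YY: "Ybar * transpose_mat Ybar = Cb"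
    and Yc: "Y \<in> carrier_mat n n" and svd: "is_svd n (transpose_mat Ybar * Y) U \<Sigma> V"
  obtains T where "psd_mat n T" "T * Cb * T = Y * transpose_mat Y"
    "Y * (V * transpose_mat U) * transpose_mat Ybar = T * Cb"
proof -
  have U: "orth_mat n U" and V: "orth_mat n V"
    and \<Sigma>: "\<Sigma> \<in> carrier_mat n n" "diagonal_mat \<Sigma>" "\<forall>k<n. \<Sigma> $$ (k,k) \<ge> 0"
    and svd: "transpose_mat Ybar * Y = U * \<Sigma> * transpose_mat V"
    using svd unfolding is_svd_def by auto
  note ms = assoc_mult_mat[of _ n n _ n _ n] mult_carrier_mat[of _ n n _ n]
  note u = orth_matD[OF U] and v = orth_matD[OF V]
  have YbTc: "transpose_mat Ybar \<in> carrier_mat n n" using Ybc by simp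
  obtain W where Wc: "W \<in> carrier_mat n n" and YW: "transpose_mat Ybar * W = 1\<^sub>m n"
    and WY: "W * transpose_mat Ybar = 1\<^sub>m n"
    using real_mat_inverse_exists[OF YbTc pd_gram_transpose_inj[OF Ybc Cb[folded YY]]] by blast
  have WTc: "transpose_mat W \<in> carrier_mat n n" using Wc by simp
  have WTY: "transpose_mat W * Ybar = 1\<^sub>m n"
    using arg_cong[OF YW, of transpose_mat] transpose_mult[OF YbTc Wc] by simp
  define M where "M = Y * (V * transpose_mat U)"
  have Mc: "M \<in> carrier_mat n n" unfolding M_def using Yc u v by simp
  have "transpose_mat M = transpose_mat (V * transpose_mat U) * transpose_mat Y"
    unfolding M_def using Yc u v by (intro transpose_mult[of _ n n]) auto
  also have "transpose_mat (V * transpose_mat U) = U * transpose_mat V"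
    using transpose_mult[of V n n "transpose_mat U" n] u v by simp
  finally have MT: "transpose_mat M = U * (transpose_mat V * transpose_mat Y)"
    using u v Yc by (simp add: ms)
  have MMT: "M * transpose_mat M = Y * transpose_mat Y"
    unfolding MT unfolding M_def using Yc u v by (simp add: ms orth_mat_cancel[OF U] orth_mat_cancel[OF V])
  define S where "S = U * \<Sigma> * transpose_mat U"
  have "transpose_mat Ybar * M = (transpose_mat Ybar * Y) * (V * transpose_mat U)"
    unfolding M_def using YbTc Yc u v by (simp add: ms)
  also have "\<dots> = S" unfolding svd S_def using u v \<Sigma>(1) by (simp add: ms orth_mat_cancel[OF V])
  finally have SM: "transpose_mat Ybar * M = S" .
  have "psd_mat n \<Sigma>"
    using diagonal_mat_eq_mat_diag[OF \<Sigma>(1,2)] psd_mat_diag_iff[of n "\<lambda>k. \<Sigma> $$ (k,k)"] \<Sigma>(3) by metis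
  hence S: "psd_mat n S" unfolding S_def using psd_congr[OF _ u(2)] by simp
  define T where "T = W * S * transpose_mat W"
  have T: "psd_mat n T" unfolding T_def using psd_congr[OF S WTc] by simp
  have TM: "T = M * transpose_mat W"
  proof -
    have "T = (W * transpose_mat Ybar) * M * transpose_mat W" unfolding T_def SM[symmetric]
      using Wc YbTc Mc WTc by (simp add: ms)
    thus ?thesis using WY Mc WTc by simp
  qed
  have TM2: "T = W * transpose_mat M"
    using arg_cong[OF TM, of transpose_mat] psd_matD(2)[OF T] transpose_mult[OF Mc WTc]
    unfolding sym_mat_def by simp
  have "T * Cb * T = M * (transpose_mat W * Ybar) * (transpose_mat Ybar * W) * transpose_mat M"
    unfolding YY[symmetric] using Mc WTc Ybc YbTc Wc
    by (subst (1) TM, subst TM2) (simp add: ms)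
  hence "T * Cb * T = Y * transpose_mat Y" unfolding WTY YW MMT[symmetric] using Mc by simp
  moreover have "T * Cb = M * (transpose_mat W * Ybar) * transpose_mat Ybar"
    unfolding TM YY[symmetric] using Mc WTc Ybc YbTc by (simp add: ms)
  hence "M * transpose_mat Ybar = T * Cb" unfolding WTY using Mc by simp
  ultimately show ?thesis using that T unfolding M_def by blast
qed

section \<open>Coordinate reflections and the block model\<close>

definition coord_reflection :: "nat \<Rightarrow> nat \<Rightarrow> real mat" where
  "coord_reflection n j = mat_diag n (\<lambda>k. if k = j then -1 else 1)"

lemma sym_involution_coord_reflection: "sym_involution n (coord_reflection n j)"
proof -
  have "(\<lambda>k. (if k = j then -1 else 1) * (if k = j then -1 else 1 :: real)) = (\<lambda>_. 1)" by auto
  hence "mat_diag n (\<lambda>k. (if k = j then -1 else 1) * (if k = j then -1 else 1 :: real)) = 1\<^sub>m n"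
    by simp
  thus ?thesis unfolding sym_involution_def coord_reflection_def by simp
qed

lemma coord_reflection_conj_index:
  assumes M: "M \<in> carrier_mat n n" and a: "a < n" and b: "b < n"
  shows "(coord_reflection n j * M * coord_reflection n j) $$ (a,b)
    = (if a = j then -1 else 1) * M $$ (a,b) * (if b = j then -1 else 1)"
  unfolding coord_reflection_def using a b M
  by (simp add: mat_diag_mult_left[OF M] mat_diag_mult_right[of _ n n])

lemma coord_reflection_fixed_offdiag:
  assumes M: "M \<in> carrier_mat n n" and fx: "coord_reflection n j * M * coord_reflection n j = M"
    and j: "j < n" and b: "b < n" and bj: "b \<noteq> j"
  shows "M $$ (j,b) = 0" "M $$ (b,j) = 0"
  using coord_reflection_conj_index[OF M j b, of j] coord_reflection_conj_index[OF M b j, of j] fx bj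
  by auto

lemma orth_conj_mult:
  assumes A: "orth_mat n A" and X: "X \<in> carrier_mat n n" and Y: "Y \<in> carrier_mat n n"
  shows "(A * X * transpose_mat A) * (A * Y * transpose_mat A) = A * (X * Y) * transpose_mat A"
  using orth_matD[OF A] X Y by (simp add: assoc_mult_mat[of _ n n _ n _ n] orth_mat_cancel[OF A])

lemma orth_conj_sym_involution:
  assumes A: "orth_mat n A" and D: "sym_involution n D"
  shows "sym_involution n (A * D * transpose_mat A)"
proof -
  note a = orth_matD[OF A] and d = sym_involutionD[OF D]
  have "transpose_mat (A * D * transpose_mat A) = A * transpose_mat (A * D)"
    using transpose_mult[of "A * D" n n "transpose_mat A" n] a d by simp
  also have "transpose_mat (A * D) = D * transpose_mat A"
    using transpose_mult[of A n n D n] a d by simp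
  finally have "transpose_mat (A * D * transpose_mat A) = A * D * transpose_mat A"
    using a d by simp
  thus ?thesis unfolding sym_involution_def
    using orth_conj_mult[OF A d(1) d(1)] a d by simp
qed

lemma block_E_carrier:
  assumes "Q \<le> P" "Nm \<in> carrier_mat (P - Q) (P - Q)"
  shows "block_E P Q p Nm \<in> carrier_mat P P"
proof -
  have "block_E P Q p Nm \<in> carrier_mat (Q + (P - Q)) (Q + (P - Q))"
    unfolding block_E_def by (rule four_block_carrier_mat[OF _ assms(2)]) simp
  thus ?thesis using assms(1) by simp
qed

lemma block_E_index:
  assumes "Q \<le> P" "Nm \<in> carrier_mat (P - Q) (P - Q)" "a < P" "b < P"
  shows "block_E P Q p Nm $$ (a,b)
    = (if a < Q \<or> b < Q then (if a = b then p a else 0) else Nm $$ (a - Q, b - Q))"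
  unfolding block_E_def using assms by auto

lemma pd_block_E:
  assumes PQ: "Q \<le> P" and p: "\<And>j. j < Q \<Longrightarrow> p j > 0" and Nm: "pd_mat (P - Q) Nm"
  shows "pd_mat P (block_E P Q p Nm)"
proof -
  define Dg where "Dg = mat_diag Q p"
  have Dg: "pd_mat Q Dg" unfolding Dg_def using pd_mat_diag p by blast
  have Dgc: "Dg \<in> carrier_mat Q Q" unfolding Dg_def by simp
  have Nc: "Nm \<in> carrier_mat (P - Q) (P - Q)" using pd_matD(1)[OF Nm] .
  have E: "block_E P Q p Nm = four_block_mat Dg (0\<^sub>m Q (P - Q)) (0\<^sub>m (P - Q) Q) Nm"
    unfolding block_E_def Dg_def mat_diag_def by (intro arg_cong4[where f = four_block_mat]) auto
  have PP: "P = Q + (P - Q)" using PQ by simp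
  have "x \<bullet> (block_E P Q p Nm *\<^sub>v x) > 0"
    if xc: "x \<in> carrier_vec (Q + (P - Q))" and x0: "x \<noteq> 0\<^sub>v (Q + (P - Q))" for x
  proof -
    obtain x1 x2 where x1: "x1 \<in> carrier_vec Q" and x2: "x2 \<in> carrier_vec (P - Q)"
      and x: "x = x1 @\<^sub>v x2"
      using vec_first_last_append[OF xc, symmetric] vec_first_carrier vec_last_carrier by blast
    have "block_E P Q p Nm *\<^sub>v x = (Dg *\<^sub>v x1) @\<^sub>v (Nm *\<^sub>v x2)"
      unfolding E x using four_block_mat_mult_vec[OF Dgc _ _ Nc x1 x2, of "0\<^sub>m Q (P - Q)" "0\<^sub>m (P - Q) Q"] x1 x2 Dgc Nc by simp
    hence qf: "x \<bullet> (block_E P Q p Nm *\<^sub>v x) = x1 \<bullet> (Dg *\<^sub>v x1) + x2 \<bullet> (Nm *\<^sub>v x2)"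
      unfolding x using x1 x2 Dgc Nc by (simp add: scalar_prod_append)
    have "0\<^sub>v (Q + (P - Q)) = 0\<^sub>v Q @\<^sub>v 0\<^sub>v (P - Q)" by (intro eq_vecI) auto
    hence "x1 \<noteq> 0\<^sub>v Q \<or> x2 \<noteq> 0\<^sub>v (P - Q)" using x0 x by auto
    moreover have "x1 \<bullet> (Dg *\<^sub>v x1) \<ge> 0" "x2 \<bullet> (Nm *\<^sub>v x2) \<ge> 0"
      using psd_matD(3)[OF pd_imp_psd[OF Dg] x1] psd_matD(3)[OF pd_imp_psd[OF Nm] x2] .
    moreover have "x1 \<noteq> 0\<^sub>v Q \<Longrightarrow> x1 \<bullet> (Dg *\<^sub>v x1) > 0" "x2 \<noteq> 0\<^sub>v (P - Q) \<Longrightarrow> x2 \<bullet> (Nm *\<^sub>v x2) > 0"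
      using pd_matD(3)[OF Dg x1] pd_matD(3)[OF Nm x2] by auto
    ultimately show ?thesis unfolding qf by linarith
  qed
  moreover have "sym_mat (block_E P Q p Nm)" unfolding sym_mat_def E
    using transpose_four_block_mat[OF Dgc _ _ Nc] pd_matD(2)[OF Dg] pd_matD(2)[OF Nm]
    unfolding sym_mat_def by simp
  ultimately show ?thesis using block_E_carrier[OF PQ Nc] PP unfolding pd_mat_def by metis
qed

lemma coord_reflection_conj_block_E:
  assumes PQ: "Q \<le> P" and Nc: "Nm \<in> carrier_mat (P - Q) (P - Q)" and j: "j < Q"
  shows "coord_reflection P j * block_E P Q p Nm * coord_reflection P j = block_E P Q p Nm"
proof -
  have Ec: "block_E P Q p Nm \<in> carrier_mat P P" using block_E_carrier[OF PQ Nc] .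
  show ?thesis
  proof (rule eq_matI)
    fix a b assume "a < dim_row (block_E P Q p Nm)" "b < dim_col (block_E P Q p Nm)"
    hence a: "a < P" and b: "b < P" using Ec by auto
    show "(coord_reflection P j * block_E P Q p Nm * coord_reflection P j) $$ (a,b) = block_E P Q p Nm $$ (a,b)"
      unfolding coord_reflection_conj_index[OF Ec a b] block_E_index[OF PQ Nc a b] using j
      by (cases "a = j"; cases "b = j") auto
  qed (use Ec in \<open>auto simp: coord_reflection_def\<close>)
qed

lemma orth_conj_mult3:
  assumes A: "orth_mat n A" and X: "X \<in> carrier_mat n n" and Y: "Y \<in> carrier_mat n n"
    and Z: "Z \<in> carrier_mat n n"
  shows "(A * X * transpose_mat A) * (A * Y * transpose_mat A) * (A * Z * transpose_mat A)
    = A * (X * Y * Z) * transpose_mat A"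
  by (simp only: orth_conj_mult[OF A X Y] orth_conj_mult[OF A mult_carrier_mat[OF X Y] Z])

lemma orth_conj_eq_iff:
  assumes A: "orth_mat n A" and X: "X \<in> carrier_mat n n" and Y: "Y \<in> carrier_mat n n"
  shows "A * X * transpose_mat A = A * Y * transpose_mat A \<longleftrightarrow> X = Y"
  using orth_conj_cancel[OF A X] orth_conj_cancel[OF A Y] by metis

lemma pd_block_model:
  assumes A: "orth_mat P A" and PQ: "Q \<le> P" and p: "\<And>j. j < Q \<Longrightarrow> p j > 0"
    and Nm: "pd_mat (P - Q) Nm"
  shows "pd_mat P (A * block_E P Q p Nm * transpose_mat A)"
  using pd_congr[OF pd_block_E[OF PQ p Nm] orth_matD(2)[OF A] orth_mat_inj[OF orth_mat_transpose[OF A]]]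
  by simp

lemma wasserstein_mean_block_reflection:
  assumes A: "orth_mat P A" and PQ: "Q \<le> P" and N: "N \<ge> 1"
    and p: "\<And>i j. i < N \<Longrightarrow> j < Q \<Longrightarrow> p i j > 0" and Nm: "\<And>i. i < N \<Longrightarrow> pd_mat (P - Q) (Nm i)"
    and mean: "is_wasserstein_mean P N (\<lambda>i. A * block_E P Q (p i) (Nm i) * transpose_mat A) Cbar"
    and j: "j < Q"
  shows "(A * coord_reflection P j * transpose_mat A) * Cbar * (A * coord_reflection P j * transpose_mat A) = Cbar"
proof (rule wasserstein_mean_conj_involution[OF mean N])
  show "sym_involution P (A * coord_reflection P j * transpose_mat A)"
    by (rule orth_conj_sym_involution[OF A sym_involution_coord_reflection])
  fix i assume i: "i < N"
  show "pd_mat P (A * block_E P Q (p i) (Nm i) * transpose_mat A)"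
    using pd_block_model[OF A PQ p[OF i] Nm[OF i]] .
  have Nc: "Nm i \<in> carrier_mat (P - Q) (P - Q)" using pd_matD(1)[OF Nm[OF i]] .
  show "(A * coord_reflection P j * transpose_mat A) * (A * block_E P Q (p i) (Nm i) * transpose_mat A)
      * (A * coord_reflection P j * transpose_mat A) = A * block_E P Q (p i) (Nm i) * transpose_mat A"
    using orth_conj_mult3[OF A _ block_E_carrier[OF PQ Nc]] coord_reflection_conj_block_E[OF PQ Nc j]
    by (simp add: coord_reflection_def)
qed

lemma pd_diag_pos: "pd_mat n B \<Longrightarrow> j < n \<Longrightarrow> B $$ (j,j) > 0"
  using mat_diag_entry_eq_quadratic_form[OF pd_matD(1)] pd_matD(3)[of n B "unit_vec n j"] by simp

lemma psd_diag_nonneg: "psd_mat n T \<Longrightarrow> j < n \<Longrightarrow> T $$ (j,j) \<ge> 0"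
  using mat_diag_entry_eq_quadratic_form[OF psd_matD(1)] psd_matD(3)[of n T "unit_vec n j"] by simp

lemma mat_mult_diag_entry:
  assumes "(X :: real mat) \<in> carrier_mat n n" "Y \<in> carrier_mat n n" "j < n"
  shows "(X * Y) $$ (j,j) = (\<Sum>a<n. X $$ (j,a) * Y $$ (a,j))"
  using assms by (simp add: scalar_prod_def lessThan_atLeast0)

lemma mat_triple_diag_entry:
  assumes X: "(X :: real mat) \<in> carrier_mat n n" and Z: "Z \<in> carrier_mat n n" and Y: "Y \<in> carrier_mat n n"
    and j: "j < n"
  shows "(X * Z * Y) $$ (j,j) = (\<Sum>a<n. \<Sum>b<n. X $$ (j,a) * Z $$ (a,b) * Y $$ (b,j))"
proof -
  have "(X * Z * Y) $$ (j,j) = (\<Sum>b<n. (\<Sum>a<n. X $$ (j,a) * Z $$ (a,b)) * Y $$ (b,j))"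
    using X Z Y j by (simp add: scalar_prod_def lessThan_atLeast0 del: assoc_mult_mat)
  also have "\<dots> = (\<Sum>b<n. \<Sum>a<n. X $$ (j,a) * Z $$ (a,b) * Y $$ (b,j))"
    by (simp add: sum_distrib_right)
  also have "\<dots> = (\<Sum>a<n. \<Sum>b<n. X $$ (j,a) * Z $$ (a,b) * Y $$ (b,j))"
    by (rule sum.swap)
  finally show ?thesis .
qed

text \<open>If the \<open>j\<close>-th row and column of \<open>T\<close> vanish off the diagonal, then \<open>(T B T)\<^sub>j\<^sub>j = T\<^sub>j\<^sub>j\<^sup>2 B\<^sub>j\<^sub>j\<close>
  and \<open>(T B)\<^sub>j\<^sub>j = T\<^sub>j\<^sub>j B\<^sub>j\<^sub>j\<close>, so the second is determined by the first.\<close>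

lemma diag_entry_from_congr_diag_entry:
  assumes T: "psd_mat n T" and B: "pd_mat n B" and j: "j < n"
    and row: "\<And>b. b < n \<Longrightarrow> b \<noteq> j \<Longrightarrow> T $$ (j,b) = 0"
    and col: "\<And>b. b < n \<Longrightarrow> b \<noteq> j \<Longrightarrow> T $$ (b,j) = 0"
  shows "(T * B) $$ (j,j) = sqrt ((T * B * T) $$ (j,j)) * sqrt (B $$ (j,j))"
proof -
  have Tc: "T \<in> carrier_mat n n" and Bc: "B \<in> carrier_mat n n" using psd_matD(1)[OF T] pd_matD(1)[OF B] .
  have "(T * B * T) $$ (j,j) = (\<Sum>a<n. \<Sum>b<n. T $$ (j,a) * B $$ (a,b) * T $$ (b,j))"
    using mat_triple_diag_entry[OF Tc Bc Tc j] .
  also have "\<dots> = (\<Sum>b<n. T $$ (j,j) * B $$ (j,b) * T $$ (b,j))"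
    by (rule sum_eq_single_term) (use j row in auto)
  also have "\<dots> = T $$ (j,j) * B $$ (j,j) * T $$ (j,j)"
    by (rule sum_eq_single_term) (use j col in auto)
  finally have TBT: "(T * B * T) $$ (j,j) = (T $$ (j,j))\<^sup>2 * B $$ (j,j)" by (simp add: power2_eq_square)
  have "(T * B) $$ (j,j) = (\<Sum>a<n. T $$ (j,a) * B $$ (a,j))" using mat_mult_diag_entry[OF Tc Bc j] .
  also have "\<dots> = T $$ (j,j) * B $$ (j,j)" by (rule sum_eq_single_term) (use j row in auto)
  finally have TB: "(T * B) $$ (j,j) = T $$ (j,j) * B $$ (j,j)" .
  have "sqrt ((T * B * T) $$ (j,j)) = T $$ (j,j) * sqrt (B $$ (j,j))"
    unfolding TBT using psd_diag_nonneg[OF T j] by (simp add: real_sqrt_mult)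
  thus ?thesis unfolding TB using pd_diag_pos[OF B j] by (simp add: mult.assoc)
qed

text \<open>The reflection \<open>A J\<^sub>j A\<^sup>T\<close> fixes \<open>C\<close> and \<open>Cb\<close>, hence the transport map, which in the
  frame \<open>A\<close> therefore decouples the \<open>j\<close>-th coordinate.\<close>

lemma block_model_aligned_diag_entry:
  assumes A: "orth_mat P A" and PQ: "Q \<le> P" and Nc: "Nm \<in> carrier_mat (P - Q) (P - Q)"
    and Cb: "pd_mat P Cb" and Ybc: "Ybar \<in> carrier_mat P P" and YY: "Ybar * transpose_mat Ybar = Cb"
    and Yc: "Y \<in> carrier_mat P P"
    and YYT: "Y * transpose_mat Y = A * block_E P Q p Nm * transpose_mat A"
    and svd: "is_svd P (transpose_mat Ybar * Y) U \<Sigma> V" and j: "j < Q"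
    and sym: "(A * coord_reflection P j * transpose_mat A) * Cb * (A * coord_reflection P j * transpose_mat A) = Cb"
  shows "(transpose_mat A * (Y * (V * transpose_mat U)) * (transpose_mat Ybar * A)) $$ (j,j)
           = sqrt (p j) * sqrt ((transpose_mat A * Cb * A) $$ (j,j))"
proof -
  note ms = assoc_mult_mat[of _ P P _ P _ P] mult_carrier_mat[of _ P P _ P]
  note a = orth_matD[OF A]
  have jP: "j < P" using j PQ by simp
  define E where "E = block_E P Q p Nm"
  have Ec: "E \<in> carrier_mat P P" unfolding E_def using block_E_carrier[OF PQ Nc] .
  obtain T where T: "psd_mat P T" and TCT: "T * Cb * T = A * E * transpose_mat A"
    and MY: "Y * (V * transpose_mat U) * transpose_mat Ybar = T * Cb"
    using procrustes_alignment_transport[OF Cb Ybc YY Yc svd] unfolding YYT E_def by blast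
  have Tc: "T \<in> carrier_mat P P" and Cbc: "Cb \<in> carrier_mat P P" using psd_matD(1)[OF T] pd_matD(1)[OF Cb] .
  define J where "J = coord_reflection P j"
  have J: "sym_involution P J" unfolding J_def by (rule sym_involution_coord_reflection)
  note jj = sym_involutionD[OF J]
  have JEJ: "J * E * J = E" unfolding J_def E_def using coord_reflection_conj_block_E[OF PQ Nc j] .
  have D: "sym_involution P (A * J * transpose_mat A)" using orth_conj_sym_involution[OF A J] .
  have "(A * J * transpose_mat A) * (A * E * transpose_mat A) * (A * J * transpose_mat A)
      = A * E * transpose_mat A"
    using orth_conj_mult[OF A] jj Ec JEJ by simp
  hence DTD: "(A * J * transpose_mat A) * T * (A * J * transpose_mat A) = T"
    using psd_transport_conj_involution[OF T Cb D] sym TCT unfolding J_def by simp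
  define T' where "T' = transpose_mat A * T * A"
  define B where "B = transpose_mat A * Cb * A"
  have T': "psd_mat P T'" unfolding T'_def using psd_congr[OF T a(1)] .
  have B: "pd_mat P B" unfolding B_def using pd_congr[OF Cb a(1) orth_mat_inj[OF A]] .
  have T'c: "T' \<in> carrier_mat P P" and Bc: "B \<in> carrier_mat P P" using psd_matD(1)[OF T'] pd_matD(1)[OF B] .
  have T_eq: "T = A * T' * transpose_mat A" and Cb_eq: "Cb = A * B * transpose_mat A"
    unfolding T'_def B_def
    using orth_conj_cancel[OF orth_mat_transpose[OF A] Tc] orth_conj_cancel[OF orth_mat_transpose[OF A] Cbc]
    unfolding transpose_transpose by simp_all
  have "A * (J * T' * J) * transpose_mat A = A * T' * transpose_mat A"
    using DTD by (simp only: T_eq orth_conj_mult3[OF A jj(1) T'c jj(1)])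
  moreover have "J * T' * J \<in> carrier_mat P P" using jj T'c by simp
  ultimately have "J * T' * J = T'" using orth_conj_eq_iff[OF A _ T'c] by blast
  note zero = coord_reflection_fixed_offdiag[OF T'c this[unfolded J_def] jP]
  have "A * (T' * B * T') * transpose_mat A = A * E * transpose_mat A"
    using TCT by (simp only: T_eq Cb_eq orth_conj_mult3[OF A T'c Bc T'c])
  moreover have "T' * B * T' \<in> carrier_mat P P" using T'c Bc by simp
  ultimately have "T' * B * T' = E" using orth_conj_eq_iff[OF A _ Ec] by blast
  hence TBT: "(T' * B * T') $$ (j,j) = p j" unfolding E_def using block_E_index[OF PQ Nc jP jP] j by simp
  have "transpose_mat A * (Y * (V * transpose_mat U)) * (transpose_mat Ybar * A)
      = transpose_mat A * (Y * (V * transpose_mat U) * transpose_mat Ybar) * A"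
    using a Yc Ybc svd unfolding is_svd_def by (simp add: ms orth_matD)
  also have "\<dots> = T' * B"
    unfolding MY T'_def B_def
    using orth_conj_mult[OF orth_mat_transpose[OF A] Tc Cbc] unfolding transpose_transpose by metis
  finally show ?thesis
    using diag_entry_from_congr_diag_entry[OF T' B jP zero] TBT unfolding B_def by simp
qed

lemma block_model_weighted_sum_aligned:
  assumes A: "orth_mat P A" and PQ: "Q \<le> P" and Nc: "Nm \<in> carrier_mat (P - Q) (P - Q)"
    and Cb: "pd_mat P Cb" and Ybc: "Ybar \<in> carrier_mat P P" and YY: "Ybar * transpose_mat Ybar = Cb"
    and Yc: "Y \<in> carrier_mat P P"
    and YYT: "Y * transpose_mat Y = A * block_E P Q p Nm * transpose_mat A"
    and svd: "is_svd P (transpose_mat Ybar * Y) U \<Sigma> V"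
    and sym: "\<And>j. j < Q \<Longrightarrow>
      (A * coord_reflection P j * transpose_mat A) * Cb * (A * coord_reflection P j * transpose_mat A) = Cb"
  shows "(\<Sum>j<Q. \<alpha> j * sqrt (p j)) = (\<Sum>j<Q. (\<alpha> j / sqrt ((transpose_mat A * Cb * A) $$ (j,j)))
           * (transpose_mat A * (Y * (V * transpose_mat U)) * (transpose_mat Ybar * A)) $$ (j,j))"
proof (intro sum.cong refl)
  fix j assume "j \<in> {..<Q}"
  hence j: "j < Q" and jP: "j < P" using PQ by auto
  have "(transpose_mat A * Cb * A) $$ (j,j) > 0"
    using pd_diag_pos[OF pd_congr[OF Cb orth_matD(1)[OF A] orth_mat_inj[OF A]] jP] .
  thus "\<alpha> j * sqrt (p j) = (\<alpha> j / sqrt ((transpose_mat A * Cb * A) $$ (j,j)))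
      * (transpose_mat A * (Y * (V * transpose_mat U)) * (transpose_mat Ybar * A)) $$ (j,j)"
    unfolding block_model_aligned_diag_entry[OF A PQ Nc Cb Ybc YY Yc YYT svd j sym[OF j]] by simp
qed

section \<open>Affine functionals of the vectorisation\<close>

lemma sum_lessThan_mult_div_mod:
  fixes m n :: nat
  shows "(\<Sum>k<m * n. f (k div n) (k mod n)) = (\<Sum>a<m. \<Sum>b<n. (f a b :: real))"
proof (induction m)
  case 0 thus ?case by simp
next
  case (Suc m)
  have "{..<Suc m * n} = {..<m * n} \<union> {m * n..<m * n + n}" by auto
  hence "(\<Sum>k<Suc m * n. f (k div n) (k mod n))
      = (\<Sum>k<m * n. f (k div n) (k mod n)) + (\<Sum>k\<in>{m * n..<m * n + n}. f (k div n) (k mod n))"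
    by (simp add: sum.union_disjoint ivl_disj_int)
  also have "(\<Sum>k\<in>{m * n..<m * n + n}. f (k div n) (k mod n)) = (\<Sum>b<n. f ((m*n + b) div n) ((m*n + b) mod n))"
    using sum.shift_bounds_nat_ivl[of "\<lambda>k. f (k div n) (k mod n)" 0 "m * n" n]
    by (simp add: lessThan_atLeast0 add.commute)
  also have "\<dots> = (\<Sum>b<n. f m b)" by (intro sum.cong refl) auto
  finally show ?case using Suc by simp
qed

lemma scalar_prod_mvec:
  assumes M: "M \<in> carrier_mat n n"
  shows "vec (n * n) (\<lambda>k. w (k div n) (k mod n)) \<bullet> mvec M = (\<Sum>a<n. \<Sum>b<n. w a b * M $$ (a,b))"
proof -
  have "vec (n * n) (\<lambda>k. w (k div n) (k mod n)) \<bullet> mvec M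
      = (\<Sum>k<n * n. w (k div n) (k mod n) * M $$ (k div n, k mod n))"
    unfolding mvec_def scalar_prod_def using M by (simp add: lessThan_atLeast0)
  thus ?thesis using sum_lessThan_mult_div_mod[where f = "\<lambda>a b. w a b * M $$ (a,b)"] by simp
qed

lemma weighted_diag_sum_affine_in_mvec:
  assumes X: "X \<in> carrier_mat n n" and Z: "Z \<in> carrier_mat n n" and Yb: "Yb \<in> carrier_mat n n"
    and q: "q \<le> n"
  obtains \<beta> c where "\<beta> \<in> carrier_vec (n * n)"
    "\<And>M. M \<in> carrier_mat n n \<Longrightarrow> (\<Sum>j<q. \<gamma> j * (X * M * Z) $$ (j,j)) = \<beta> \<bullet> mvec (M - Yb) + c"
proof -
  define w where "w a b = (\<Sum>j<q. \<gamma> j * X $$ (j,a) * Z $$ (b,j))" for a b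
  define \<beta> where "\<beta> = vec (n * n) (\<lambda>k. w (k div n) (k mod n))"
  define c where "c = (\<Sum>a<n. \<Sum>b<n. w a b * Yb $$ (a,b))"
  have "(\<Sum>j<q. \<gamma> j * (X * M * Z) $$ (j,j)) = \<beta> \<bullet> mvec (M - Yb) + c"
    if M: "M \<in> carrier_mat n n" for M
  proof -
    have "(\<Sum>j<q. \<gamma> j * (X * M * Z) $$ (j,j))
        = (\<Sum>j<q. \<Sum>a<n. \<Sum>b<n. \<gamma> j * X $$ (j,a) * Z $$ (b,j) * M $$ (a,b))"
      using mat_triple_diag_entry[OF X M Z] q
      by (intro sum.cong refl) (simp add: sum_distrib_left ac_simps)
    also have "\<dots> = (\<Sum>a<n. \<Sum>j<q. \<Sum>b<n. \<gamma> j * X $$ (j,a) * Z $$ (b,j) * M $$ (a,b))"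
      by (rule sum.swap)
    also have "\<dots> = (\<Sum>a<n. \<Sum>b<n. \<Sum>j<q. \<gamma> j * X $$ (j,a) * Z $$ (b,j) * M $$ (a,b))"
      by (rule sum.cong[OF refl], rule sum.swap)
    also have "\<dots> = (\<Sum>a<n. \<Sum>b<n. w a b * M $$ (a,b))"
      unfolding w_def by (simp add: sum_distrib_right)
    also have "\<dots> = \<beta> \<bullet> mvec (M - Yb) + c"
    proof -
      have "\<beta> \<bullet> mvec (M - Yb) = (\<Sum>a<n. \<Sum>b<n. w a b * (M $$ (a,b) - Yb $$ (a,b)))"
        unfolding \<beta>_def using scalar_prod_mvec[OF minus_carrier_mat[OF Yb], of w M] M Yb
        by (auto intro!: sum.cong)
      thus ?thesis unfolding c_def by (simp add: algebra_simps sum_subtractf)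
    qed
    finally show ?thesis .
  qed
  moreover have "\<beta> \<in> carrier_vec (n * n)" unfolding \<beta>_def by simp
  ultimately show ?thesis using that by blast
qed


theorem proposition3:
  fixes P Q N :: nat
    and A :: "real mat"
    and p :: "nat \<Rightarrow> nat \<Rightarrow> real"
    and Nm :: "nat \<Rightarrow> real mat"
    and \<alpha> :: "nat \<Rightarrow> real"
    and Cbar Ybar :: "real mat"
    and Y U \<Sigma> V :: "nat \<Rightarrow> real mat"
  assumes "P > Q" and "Q \<ge> 1" and "N \<ge> 1"
    and "orth_mat P A"
    and "\<And>i j. i < N \<Longrightarrow> j < Q \<Longrightarrow> p i j > 0"
    and "\<And>i. i < N \<Longrightarrow> pd_mat (P - Q) (Nm i)"
    and "is_wasserstein_mean P N
           (\<lambda>i. A * block_E P Q (p i) (Nm i) * transpose_mat A) Cbar"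
    and "Ybar \<in> carrier_mat P P" and "Ybar * transpose_mat Ybar = Cbar"
    and "\<And>i. i < N \<Longrightarrow> Y i \<in> carrier_mat P P"
    and "\<And>i. i < N \<Longrightarrow>
           Y i * transpose_mat (Y i) = A * block_E P Q (p i) (Nm i) * transpose_mat A"
    and "\<And>i. i < N \<Longrightarrow> orth_mat P (U i)"
    and "\<And>i. i < N \<Longrightarrow> orth_mat P (V i)"
    and "\<And>i. i < N \<Longrightarrow> \<Sigma> i \<in> carrier_mat P P \<and> diagonal_mat (\<Sigma> i)
           \<and> (\<forall>k<P. \<Sigma> i $$ (k, k) \<ge> 0)"
    and "\<And>i. i < N \<Longrightarrow>
           transpose_mat Ybar * Y i = U i * \<Sigma> i * transpose_mat (V i)"
  shows "\<exists>\<beta> \<in> carrier_vec (P * P). \<exists>c::real. \<forall>i<N.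
           (\<Sum>j<Q. \<alpha> j * sqrt (p i j))
             = \<beta> \<bullet> mvec (Y i * (V i * transpose_mat (U i)) - Ybar) + c"
proof -
  have PQ: "Q \<le> P" using assms(1) by simp
  note A = assms(4) and a = orth_matD[OF assms(4)]
  have Cb: "pd_mat P Cbar" using assms(7) unfolding is_wasserstein_mean_def by simp
  note mean_sym = wasserstein_mean_block_reflection[OF A PQ assms(3,5,6,7)]
  define B where "B = transpose_mat A * Cbar * A"
  have Zc: "transpose_mat Ybar * A \<in> carrier_mat P P" using assms(8) a(1) by simp
  obtain \<beta> c where \<beta>: "\<beta> \<in> carrier_vec (P * P)" and affine: "\<And>M. M \<in> carrier_mat P P \<Longrightarrow>
      (\<Sum>j<Q. (\<alpha> j / sqrt (B $$ (j,j))) * (transpose_mat A * M * (transpose_mat Ybar * A)) $$ (j,j))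
        = \<beta> \<bullet> mvec (M - Ybar) + c"
    by (rule weighted_diag_sum_affine_in_mvec[OF a(2) Zc assms(8) PQ,
          where \<gamma> = "\<lambda>j. \<alpha> j / sqrt (B $$ (j,j))"]) blast
  have "(\<Sum>j<Q. \<alpha> j * sqrt (p i j)) = \<beta> \<bullet> mvec (Y i * (V i * transpose_mat (U i)) - Ybar) + c"
    if i: "i < N" for i
  proof -
    have svd: "is_svd P (transpose_mat Ybar * Y i) (U i) (\<Sigma> i) (V i)"
      using assms(12-15)[OF i] unfolding is_svd_def by blast
    have Mc: "Y i * (V i * transpose_mat (U i)) \<in> carrier_mat P P"
      using assms(10)[OF i] assms(12,13)[OF i, THEN orth_matD(1)] assms(12)[OF i, THEN orth_matD(2)] by simp
    show ?thesis
      by (rule trans[OF block_model_weighted_sum_aligned[OF A PQ pd_matD(1)[OF assms(6)[OF i]] Cb assms(8,9)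
          assms(10,11)[OF i] svd mean_sym] affine[OF Mc, unfolded B_def]])
  qed
  thus ?thesis using \<beta> by blast
qed

end
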